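(* Let $n=qd$ for positive integers $q,d$, let $C\in\mathbb{S}^n$, and let $p>\frac{d+1}{d+3}n$. Then every second-order critical point $Y$ of (OrthoCut-BM) is globally optimal for (OrthoCut-BM), and $X=YY^\top$ is globally optimal for (OrthoCut). In particular, for $d=1$ (Max-Cut SDP) it suffices that $p>\frac{n}{2}$.
   Context: $\mathbb{S}^n$: real symmetric $n\times n$ matrices; $\langle U,V\rangle=\operatorname{tr}(U^\top V)$. For $X\in\mathbb{S}^n$ partitioned into $d\times d$ blocks $X_{ij}$, $\operatorname{sbd}(X)$ keeps the diagonal blocks $X_{ii}$ and zeros out the others. (OrthoCut): minimize $\langle C,X\rangle$ over $X\in\mathbb{S}^n$ with $\operatorname{sbd}(X)=I_n$, $X\succeq0$. (OrthoCut-BM): minimize $\langle CY,Y\rangle$ over $Y\in\mathbb{R}^{n\times p}$ with $Y^\top=[Y_1\ \cdots\ Y_q]$, $Y_k\in\mathbb{R}^{p\times d}$, subject to $Y_k^\top Y_k=I_d$ for all $k$. These are instances of the general form with constraints $\langle A_\ell,YY^\top\rangle=b_\ell$ given by the entries (on and above the diagonal) of the diagonal blocks, i.e., $\mathcal{A}(X)=$ the collection of entries of the diagonal blocks $X_{kk}$ on or above their diagonal, with $b$ the corresponding entries of $I_n$, and $\mathcal{A}^*$ its adjoint. For feasible $Y$: $T_Y=\{\dot Y:\mathcal{A}(\dot YY^\top+Y\dot Y^\top)=0\}$; $G_{ij}=\langle A_iY,A_jY\rangle$; $\mu=G^\dagger\mathcal{A}(CYY^\top)$; $S(Y)=C-\mathcal{A}^*(\mu)$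 (equivalently, $S(Y)=C-\Lambda$ where $\Lambda$ is block diagonal with symmetric diagonal blocks $\Lambda_{kk}$ chosen so that $S(Y)$ corresponds to the orthogonal projection of $CY$ onto $T_Y$). $Y$ is second-order critical if $S(Y)Y=0$ and $\langle\dot Y,S(Y)\dot Y\rangle\ge0$ for all $\dot Y\in T_Y$. *)

theory Defs
  imports "Jordan_Normal_Form.Matrix"
begin

definition frob :: "real mat \<Rightarrow> real mat \<Rightarrow> real" where
  "frob U V = (\<Sum>i<dim_row U. \<Sum>j<dim_col U. U $$ (i,j) * V $$ (i,j))"

definition sym_mat :: "real mat \<Rightarrow> bool" where
  "sym_mat X \<longleftrightarrow> X \<in> carrier_mat (dim_row X) (dim_row X) \<and> transpose_mat X = X"

definition psd :: "real mat \<Rightarrow> bool" where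
  "psd X \<longleftrightarrow> sym_mat X \<and>
     (\<forall>v \<in> carrier_vec (dim_row X). v \<bullet> (X *\<^sub>v v) \<ge> 0)"

definition same_block :: "nat \<Rightarrow> nat \<Rightarrow> nat \<Rightarrow> bool" where
  "same_block d i j \<longleftrightarrow> i div d = j div d"

definition sbd_eq_id :: "nat \<Rightarrow> real mat \<Rightarrow> bool" where
  "sbd_eq_id d X \<longleftrightarrow> (\<forall>i<dim_row X. \<forall>j<dim_row X.
      same_block d i j \<longrightarrow> X $$ (i,j) = (if i = j then 1 else 0))"

definition orthocut_feasible :: "nat \<Rightarrow> nat \<Rightarrow> real mat \<Rightarrow> bool" where
  "orthocut_feasible n d X \<longleftrightarrow> X \<in> carrier_mat n n \<and> sym_mat X \<and> sbd_eq_id d X \<and> psd X"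

text \<open>Feasible set of (OrthoCut-BM): Y_k^T Y_k = I_d for every block k, where
  Y^T = [Y_1 ... Y_q], i.e. Y_k^T consists of rows k*d .. k*d+d-1 of Y.\<close>
definition bm_feasible :: "nat \<Rightarrow> nat \<Rightarrow> nat \<Rightarrow> real mat \<Rightarrow> bool" where
  "bm_feasible q d p Y \<longleftrightarrow> Y \<in> carrier_mat (q*d) p \<and>
     (\<forall>k<q. \<forall>a<d. \<forall>b<d.
        (\<Sum>l<p. Y $$ (k*d+a, l) * Y $$ (k*d+b, l)) = (if a = b then 1 else 0))"

definition bm_obj :: "real mat \<Rightarrow> real mat \<Rightarrow> real" where
  "bm_obj C Y = frob (C * Y) Y"

text \<open>Tangent space T_Y: A(Ydot Y^T + Y Ydot^T) = 0, i.e. the entries on or above the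
  diagonal of every diagonal block vanish.\<close>
definition tangent :: "nat \<Rightarrow> real mat \<Rightarrow> real mat \<Rightarrow> bool" where
  "tangent d Y Yd \<longleftrightarrow> Yd \<in> carrier_mat (dim_row Y) (dim_col Y) \<and>
     (let M = Yd * transpose_mat Y + Y * transpose_mat Yd in
      \<forall>i<dim_row Y. \<forall>j<dim_row Y. same_block d i j \<and> i \<le> j \<longrightarrow> M $$ (i,j) = 0)"

definition block_diag_sym :: "nat \<Rightarrow> nat \<Rightarrow> real mat \<Rightarrow> bool" where
  "block_diag_sym n d L \<longleftrightarrow> L \<in> carrier_mat n n \<and> transpose_mat L = L \<and>
     (\<forall>i<n. \<forall>j<n. \<not> same_block d i j \<longrightarrow> L $$ (i,j) = 0)"

text \<open>S(Y) = C - Lambda, where Lambda is the block-diagonal matrix with symmetric blocks such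
  that (C - Lambda) Y is the orthogonal projection of CY onto T_Y.  (Lambda Y is automatically
  orthogonal to T_Y, so the projection condition amounts to (C - Lambda) Y in T_Y; for feasible
  Y this Lambda is unique.)\<close>
definition S_mat :: "nat \<Rightarrow> real mat \<Rightarrow> real mat \<Rightarrow> real mat" where
  "S_mat d C Y = C - (THE L. block_diag_sym (dim_row Y) d L \<and> tangent d Y ((C - L) * Y))"

definition second_order_critical :: "nat \<Rightarrow> nat \<Rightarrow> nat \<Rightarrow> real mat \<Rightarrow> real mat \<Rightarrow> bool" where
  "second_order_critical q d p C Y \<longleftrightarrow> bm_feasible q d p Y \<and>
     S_mat d C Y * Y = 0\<^sub>m (q*d) p \<and>
     (\<forall>Yd. tangent d Y Yd \<longrightarrow> frob Yd (S_mat d C Y * Yd) \<ge> 0)"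

end

theory Submission
  imports Defs
begin

(* Let S = C - Lambda be the dual slack matrix at a second-order critical point Y, where Lambda is
   the block diagonal multiplier; first-order criticality says S Y = 0.  Once S is positive
   semidefinite, weak duality with the dual certificate Lambda shows that Y Y^T is optimal for
   (OrthoCut), and hence Y for (OrthoCut-BM).

   To prove v^T S v >= 0, find a tangent direction Y' = v z^T + Y Q with z <> 0: since S Y = 0,
   the second-order condition gives 0 <= <Y', S Y'> = |z|^2 v^T S v.  If rank Y < p, take z in the
   kernel of Y and Q = 0.  Otherwise take Q = Y^T E Y / 2 with E symmetric and block diagonal;
   tangency is then a homogeneous linear system in (z, E).  Choosing a basis of the row space
   greedily and forcing E to vanish on pairs of redundant rows makes E |-> Y^T E Y injective, so a
   nonzero solution has z <> 0.  There are at most (d+1)(n-p)/2 such pairs, so the system has more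
   unknowns than equations as soon as p > (d+1) n / (d+3). *)

section \<open>Linear algebra\<close>

lemma homogeneous_system_nontrivial_solution:
  fixes A :: "'i \<Rightarrow> 'j \<Rightarrow> real"
  assumes "finite I" "finite J" "card I < card J"
  shows "\<exists>x. (\<exists>j\<in>J. x j \<noteq> 0) \<and> (\<forall>i\<in>I. (\<Sum>j\<in>J. A i j * x j) = 0)"
  using assms
proof (induction I arbitrary: J A rule: finite_induct)
  case empty
  then obtain j0 where j0: "j0 \<in> J" by (metis card.empty card_gt_0_iff ex_in_conv)
  show ?case by (rule exI[of _ "\<lambda>j. if j = j0 then 1 else 0"]) (use j0 in auto)
next
  case (insert i0 I)
  show ?case
  proof (cases "\<forall>j\<in>J. A i0 j = 0")
    case True
    from insert.IH[of J A] insert.prems insert.hyps obtain x where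
      x: "\<exists>j\<in>J. x j \<noteq> 0" "\<forall>i\<in>I. (\<Sum>j\<in>J. A i j * x j) = 0" by auto
    show ?thesis using x True by (intro exI[of _ x]) auto
  next
    case False
    then obtain j0 where j0: "j0 \<in> J" "A i0 j0 \<noteq> 0" by auto
    define J' where "J' = J - {j0}"
    define A' where "A' = (\<lambda>i j. A i j - A i j0 * A i0 j / A i0 j0)"
    have cJ: "card J' = card J - 1" unfolding J'_def using j0 insert.prems by simp
    have "card I < card J'" using insert.prems insert.hyps cJ by simp
    from insert.IH[of J' A'] this insert.prems obtain x' where
      x': "\<exists>j\<in>J'. x' j \<noteq> 0" "\<forall>i\<in>I. (\<Sum>j\<in>J'. A' i j * x' j) = 0"
      unfolding J'_def by auto
    define x where "x = (\<lambda>j. if j = j0 then - (\<Sum>j\<in>J'. A i0 j * x' j) / A i0 j0 else x' j)"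
    have split: "(\<Sum>j\<in>J. f j) = f j0 + (\<Sum>j\<in>J'. f j)" for f :: "'j \<Rightarrow> real"
      unfolding J'_def using j0 insert.prems by (simp add: sum.remove)
    have xJ': "\<And>j. j \<in> J' \<Longrightarrow> x j = x' j" unfolding x_def J'_def by auto
    have e0: "(\<Sum>j\<in>J. A i0 j * x j) = 0"
      unfolding split using xJ' j0 by (simp add: x_def)
    have eI: "(\<Sum>j\<in>J. A i j * x j) = 0" if i: "i \<in> I" for i
    proof -
      have "(\<Sum>j\<in>J. A i j * x j) = A i j0 * x j0 + (\<Sum>j\<in>J'. A i j * x' j)"
        unfolding split using xJ' by simp
      also have "\<dots> = (\<Sum>j\<in>J'. A' i j * x' j)"
        unfolding A'_def x_def using j0
        by (simp add: algebra_simps sum_subtractf sum_distrib_left sum_divide_distrib)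
      also have "\<dots> = 0" using x' i by auto
      finally show ?thesis .
    qed
    have nz: "\<exists>j\<in>J. x j \<noteq> 0"
    proof -
      obtain j where "j \<in> J'" "x' j \<noteq> 0" using x' by auto
      then show ?thesis using xJ' unfolding J'_def by (intro bexI[of _ j]) auto
    qed
    show ?thesis using nz e0 eI by (intro exI[of _ x]) auto
  qed
qed

lemma linear_functional_sum:
  fixes l :: "('j \<Rightarrow> real) \<Rightarrow> real"
  assumes add: "\<And>x y. l (\<lambda>j. x j + y j) = l x + l y"
    and scale: "\<And>x c. l (\<lambda>j. c * x j) = c * l x"
    and "finite J"
  shows "l (\<lambda>k. \<Sum>j\<in>J. f j k) = (\<Sum>j\<in>J. l (f j))"
  using \<open>finite J\<close>
proof (induction J rule: finite_induct)
  case empty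
  have "l (\<lambda>k. 0) = l (\<lambda>k. 0 * f undefined k)" by simp
  also have "\<dots> = 0" by (subst scale) simp
  finally show ?case by simp
next
  case (insert j J)
  then show ?case using add[of "f j"] by simp
qed

lemma linear_system_nontrivial_solution:
  fixes l :: "'i \<Rightarrow> ('j \<Rightarrow> real) \<Rightarrow> real"
  assumes "finite I" "finite J" "card I < card J"
    and add: "\<And>i x y. i \<in> I \<Longrightarrow> l i (\<lambda>j. x j + y j) = l i x + l i y"
    and scale: "\<And>i x c. i \<in> I \<Longrightarrow> l i (\<lambda>j. c * x j) = c * l i x"
  shows "\<exists>x. (\<exists>j\<in>J. x j \<noteq> 0) \<and> (\<forall>i\<in>I. l i x = 0)"
proof -
  define unit :: "'j \<Rightarrow> 'j \<Rightarrow> real" where "unit j = (\<lambda>k. if k = j then 1 else 0)" for j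
  obtain c where c: "\<exists>j\<in>J. c j \<noteq> 0" "\<forall>i\<in>I. (\<Sum>j\<in>J. l i (unit j) * c j) = 0"
    using homogeneous_system_nontrivial_solution[OF assms(1-3), of "\<lambda>i j. l i (unit j)"] by blast
  define x where "x = (\<lambda>k. \<Sum>j\<in>J. c j * unit j k)"
  have "x j = c j" if "j \<in> J" for j
    unfolding x_def unit_def using that assms(2) by (simp add: if_distrib cong: if_cong)
  moreover have "l i x = 0" if "i \<in> I" for i
  proof -
    have "l i x = (\<Sum>j\<in>J. l i (\<lambda>k. c j * unit j k))"
      unfolding x_def by (rule linear_functional_sum[OF add[OF that] scale[OF that] assms(2)])
    also have "\<dots> = (\<Sum>j\<in>J. l i (unit j) * c j)"
      using scale[OF that] by (simp add: mult.commute)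
    finally show ?thesis using c that by simp
  qed
  ultimately show ?thesis using c(1) by (intro exI[of _ x]) auto
qed

lemma sum_swap_pairs:
  fixes f :: "'a \<Rightarrow> 'b \<Rightarrow> 'c \<Rightarrow> 'e \<Rightarrow> real"
  shows "(\<Sum>a\<in>A. \<Sum>b\<in>B. \<Sum>c\<in>C. \<Sum>e\<in>D. f a b c e) = (\<Sum>c\<in>C. \<Sum>e\<in>D. \<Sum>a\<in>A. \<Sum>b\<in>B. f a b c e)"
proof -
  have "(\<Sum>a\<in>A. \<Sum>b\<in>B. \<Sum>c\<in>C. \<Sum>e\<in>D. f a b c e) = (\<Sum>a\<in>A. \<Sum>c\<in>C. \<Sum>b\<in>B. \<Sum>e\<in>D. f a b c e)"
    by (rule sum.cong[OF refl], rule sum.swap)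
  also have "\<dots> = (\<Sum>c\<in>C. \<Sum>a\<in>A. \<Sum>b\<in>B. \<Sum>e\<in>D. f a b c e)" by (rule sum.swap)
  also have "\<dots> = (\<Sum>c\<in>C. \<Sum>a\<in>A. \<Sum>e\<in>D. \<Sum>b\<in>B. f a b c e)"
    by (rule sum.cong[OF refl], rule sum.cong[OF refl], rule sum.swap)
  also have "\<dots> = (\<Sum>c\<in>C. \<Sum>e\<in>D. \<Sum>a\<in>A. \<Sum>b\<in>B. f a b c e)"
    by (rule sum.cong[OF refl], rule sum.swap)
  finally show ?thesis .
qed

lemma sum_bilinear_sym:
  fixes M :: "'a \<Rightarrow> 'a \<Rightarrow> real"
  assumes "\<And>a b. M a b = M b a"
  shows "(\<Sum>a\<in>A. \<Sum>b\<in>A. f a k * M a b * f b l) = (\<Sum>a\<in>A. \<Sum>b\<in>A. f a l * M a b * f b k)"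
proof -
  have "(\<Sum>a\<in>A. \<Sum>b\<in>A. f a k * M a b * f b l) = (\<Sum>b\<in>A. \<Sum>a\<in>A. f a k * M a b * f b l)"
    by (rule sum.swap)
  also have "\<dots> = (\<Sum>b\<in>A. \<Sum>a\<in>A. f b l * M b a * f a k)"
  proof (intro sum.cong refl)
    fix a b
    show "f a k * M a b * f b l = f b l * M b a * f a k"
      using assms[of a b] by (simp add: mult_ac)
  qed
  finally show ?thesis .
qed

section \<open>Positive semidefinite forms\<close>

definition qform :: "nat \<Rightarrow> (nat \<Rightarrow> nat \<Rightarrow> real) \<Rightarrow> (nat \<Rightarrow> real) \<Rightarrow> real" where
  "qform n X v = (\<Sum>i<n. \<Sum>j<n. v i * X i j * v j)"

definition psd_form :: "nat \<Rightarrow> (nat \<Rightarrow> nat \<Rightarrow> real) \<Rightarrow> bool" where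
  "psd_form n X \<longleftrightarrow> (\<forall>v. 0 \<le> qform n X v)"

lemma qform_add_unit:
  assumes "k < n" and sym: "\<And>i. i < n \<Longrightarrow> X i k = X k i"
  shows "qform n X (\<lambda>i. v i + t * (if i = k then 1 else 0))
    = qform n X v + 2 * t * (\<Sum>j<n. X k j * v j) + t\<^sup>2 * X k k"
proof -
  have if_const: "(\<Sum>j<n. if P then f j else 0) = (if P then (\<Sum>j<n. f j) else (0::real))" for P f
    by simp
  have "qform n X (\<lambda>i. v i + t * (if i = k then 1 else 0))
    = (\<Sum>i<n. \<Sum>j<n. v i * X i j * v j + (if i = k then t * (X k j * v j) else 0)
        + (if j = k then t * (v i * X i k) else 0) + (if i = k then if j = k then t\<^sup>2 * X k k else 0 else 0))"
    unfolding qform_def by (intro sum.cong refl) (auto simp: algebra_simps power2_eq_square)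
  also have "\<dots> = qform n X v + t * (\<Sum>j<n. X k j * v j) + t * (\<Sum>i<n. v i * X i k) + t\<^sup>2 * X k k"
    unfolding qform_def using \<open>k < n\<close> by (simp add: sum.distrib sum_distrib_left if_const)
  also have "(\<Sum>i<n. v i * X i k) = (\<Sum>j<n. X k j * v j)"
    using sym by (intro sum.cong) (auto simp: mult.commute)
  finally show ?thesis by simp
qed

lemma qform_unit:
  assumes "k < n" and "\<And>i. i < n \<Longrightarrow> X i k = X k i"
  shows "qform n X (\<lambda>i. if i = k then 1 else 0) = X k k"
  using qform_add_unit[of k n X "\<lambda>_. 0" 1, OF assms] by (simp add: qform_def)

lemma psd_form_zero_diag:
  assumes psd: "psd_form n X" and sym: "\<And>i j. i < n \<Longrightarrow> j < n \<Longrightarrow> X i j = X j i"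
    and "i < n" "k < n" "X k k = 0"
  shows "X k i = 0"
proof (rule ccontr)
  assume ne: "X k i \<noteq> 0"
  define t where "t = - (X i i + 1) / (2 * X k i)"
  have "0 \<le> qform n X (\<lambda>a. (if a = i then 1 else 0) + t * (if a = k then 1 else 0))"
    using psd unfolding psd_form_def by blast
  also have "\<dots> = X i i + 2 * t * X k i"
  proof -
    have "(\<Sum>j<n. X k j * (if j = i then 1 else 0)) = (\<Sum>j<n. if j = i then X k j else 0)"
      by (intro sum.cong) auto
    with \<open>i < n\<close> have "(\<Sum>j<n. X k j * (if j = i then 1 else 0)) = X k i" by simp
    then show ?thesis
      using qform_add_unit[of k n X "\<lambda>a. if a = i then 1 else 0" t, OF \<open>k < n\<close> sym[OF _ \<open>k < n\<close>]]
        qform_unit[of i n X, OF \<open>i < n\<close> sym[OF _ \<open>i < n\<close>]] \<open>X k k = 0\<close> by simp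
  qed
  also have "\<dots> = -1" using ne by (simp add: t_def field_simps)
  finally show False by simp
qed

lemma psd_form_schur_complement:
  assumes psd: "psd_form n X" and sym: "\<And>i j. i < n \<Longrightarrow> j < n \<Longrightarrow> X i j = X j i"
    and "k < n" "0 < X k k"
  shows "psd_form n (\<lambda>i j. X i j - X i k * X k j / X k k)"
  unfolding psd_form_def
proof
  fix v
  define w where "w = (\<Sum>j<n. X k j * v j)"
  have "(\<Sum>i<n. \<Sum>j<n. (v i * X i k) * (X k j * v j)) = w\<^sup>2"
  proof -
    have "(\<Sum>i<n. v i * X i k) = w"
      unfolding w_def by (intro sum.cong refl) (simp add: sym[OF _ \<open>k < n\<close>] mult.commute)
    then show ?thesis by (simp add: sum_product[symmetric] power2_eq_square w_def)
  qed
  moreover have "qform n (\<lambda>i j. X i j - X i k * X k j / X k k) v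
      = (\<Sum>i<n. \<Sum>j<n. v i * X i j * v j - (v i * X i k) * (X k j * v j) / X k k)"
    unfolding qform_def by (intro sum.cong refl) (simp add: algebra_simps)
  ultimately have "qform n (\<lambda>i j. X i j - X i k * X k j / X k k) v = qform n X v - w\<^sup>2 / X k k"
    unfolding qform_def by (simp add: sum_subtractf flip: sum_divide_distrib)
  also have "\<dots> = qform n X (\<lambda>i. v i + (- w / X k k) * (if i = k then 1 else 0))"
    using qform_add_unit[of k n X v "- w / X k k", OF \<open>k < n\<close> sym[OF _ \<open>k < n\<close>]] \<open>0 < X k k\<close>
    by (simp add: w_def power2_eq_square field_simps)
  also have "0 \<le> \<dots>" using psd unfolding psd_form_def by blast
  finally show "0 \<le> qform n (\<lambda>i j. X i j - X i k * X k j / X k k) v" .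
qed

lemma inner_schur_complement_split:
  assumes sym: "\<And>i j. i < n \<Longrightarrow> j < n \<Longrightarrow> X i j = X j i" and "k < n" "X k k \<noteq> 0"
  shows "(\<Sum>i<n. \<Sum>j<n. S i j * X i j)
    = (\<Sum>i<n. \<Sum>j<n. S i j * (X i j - X i k * X k j / X k k)) + qform n S (\<lambda>i. X i k) / X k k"
proof -
  have "S i j * X i j = S i j * (X i j - X i k * X k j / X k k) + X i k * S i j * X j k / X k k"
    if "j < n" for i j
    using sym[of k j] that assms(2,3) by (simp add: field_simps)
  then show ?thesis
    unfolding qform_def by (simp add: sum.distrib flip: sum_divide_distrib)
qed

text \<open>Fejer's theorem. The induction empties \<open>X\<close> one row and column at a time by
  Schur complement steps.\<close>
lemma psd_form_inner_nonneg:
  assumes S: "psd_form n S" and X: "psd_form n X"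
    and sym: "\<And>i j. i < n \<Longrightarrow> j < n \<Longrightarrow> X i j = X j i"
  shows "0 \<le> (\<Sum>i<n. \<Sum>j<n. S i j * X i j)"
proof -
  have main: "0 \<le> (\<Sum>i<n. \<Sum>j<n. S i j * X i j)"
    if "psd_form n X" "\<And>i j. i < n \<Longrightarrow> j < n \<Longrightarrow> X i j = X j i"
      "\<And>i j. i < n \<Longrightarrow> j < n \<Longrightarrow> k \<le> i \<or> k \<le> j \<Longrightarrow> X i j = 0" for k X
    using that
  proof (induction k arbitrary: X)
    case 0
    then show ?case by simp
  next
    case (Suc k)
    note psdX = Suc.prems(1) and symX = Suc.prems(2) and supp = Suc.prems(3)
    show ?case
    proof (cases "k < n \<and> X k k \<noteq> 0")
      case False
      have "X i j = 0" if "i < n" "j < n" "k \<le> i \<or> k \<le> j" for i j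
      proof (cases "i = k \<or> j = k")
        case True
        with False that have "k < n" "X k k = 0" by auto
        then have "X k i = 0" "X k j = 0"
          using psd_form_zero_diag[OF psdX symX] that by auto
        then show ?thesis using True symX[OF \<open>k < n\<close> \<open>i < n\<close>] by auto
      qed (use that supp in auto)
      from Suc.IH[OF psdX symX this] show ?thesis .
    next
      case True
      then have "k < n" by simp
      have "0 \<le> qform n X (\<lambda>i. if i = k then 1 else 0)"
        using psdX unfolding psd_form_def by blast
      with True have pos: "0 < X k k"
        using qform_unit[of k n X, OF \<open>k < n\<close> symX[OF _ \<open>k < n\<close>]] by simp
      define X' where "X' i j = X i j - X i k * X k j / X k k" for i j
      have "0 \<le> (\<Sum>i<n. \<Sum>j<n. S i j * X' i j)"
      proof (rule Suc.IH)
        show "psd_form n X'"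
          unfolding X'_def by (rule psd_form_schur_complement[OF psdX symX \<open>k < n\<close> pos])
        show "X' i j = X' j i" if "i < n" "j < n" for i j
          unfolding X'_def using symX[of i j] symX[of i k] symX[of k j] that \<open>k < n\<close>
          by (simp add: mult.commute)
        show "X' i j = 0" if "i < n" "j < n" "k \<le> i \<or> k \<le> j" for i j
          unfolding X'_def using that supp[of i j] supp[of i k] supp[of k j] \<open>k < n\<close> pos
          by (cases "i = k"; cases "j = k") auto
      qed
      moreover have "0 \<le> qform n S (\<lambda>i. X i k)" using S unfolding psd_form_def by blast
      moreover have "(\<Sum>i<n. \<Sum>j<n. S i j * X i j)
          = (\<Sum>i<n. \<Sum>j<n. S i j * X' i j) + qform n S (\<lambda>i. X i k) / X k k"
        unfolding X'_def using inner_schur_complement_split[OF symX \<open>k < n\<close>] pos by simp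
      ultimately show ?thesis using pos by simp
    qed
  qed
  show ?thesis by (rule main[OF X sym, of n]) auto
qed

section \<open>Rows with orthonormal blocks\<close>

lemma card_block_le:
  assumes "d > 0"
  shows "card {b \<in> A. b div d = k} \<le> (d::nat)"
proof -
  have "{b \<in> A. b div d = k} \<subseteq> {k*d..<k*d+d}"
  proof
    fix b assume "b \<in> {b \<in> A. b div d = k}"
    then have "b = k*d + b mod d" using div_mult_mod_eq[of b d] by simp
    moreover have "b mod d < d" using assms by simp
    ultimately show "b \<in> {k*d..<k*d+d}" by (simp only: atLeastLessThan_iff) linarith
  qed
  from card_mono[OF _ this] show ?thesis by simp
qed

lemma card_block_pairs_le:
  fixes A :: "nat set"
  assumes "finite A" "d > 0"
  shows "2 * card {(a,b). a \<in> A \<and> b \<in> A \<and> a \<le> b \<and> a div d = b div d} \<le> (d+1) * card A"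
proof -
  define Up where "Up = {(a,b). a \<in> A \<and> b \<in> A \<and> a \<le> b \<and> a div d = b div d}"
  define Down where "Down = {(a,b). a \<in> A \<and> b \<in> A \<and> b \<le> a \<and> a div d = b div d}"
  define Full where "Full = {(a,b). a \<in> A \<and> b \<in> A \<and> a div d = b div d}"
  have "finite Full"
    by (rule finite_subset[of _ "A \<times> A"]) (auto simp: Full_def \<open>finite A\<close>)
  moreover have union: "Up \<union> Down = Full" and inter: "Up \<inter> Down = (\<lambda>a. (a,a)) ` A"
    unfolding Up_def Down_def Full_def by auto
  ultimately have "finite Up" "finite Down" by (metis finite_Un)+
  then have "card Up + card Down = card Full + card A"
    using card_Un_Int[of Up Down] union inter by (simp add: card_image inj_on_def)
  moreover have "card Down = card Up"
  proof -
    have "Down = prod.swap ` Up" unfolding Up_def Down_def by force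
    then show ?thesis by (simp add: card_image)
  qed
  moreover have "card Full \<le> d * card A"
  proof -
    have "Full = (\<Union>a\<in>A. Pair a ` {b \<in> A. b div d = a div d})"
      unfolding Full_def by auto
    then have "card Full \<le> (\<Sum>a\<in>A. card (Pair a ` {b \<in> A. b div d = a div d}))"
      using card_UN_le[OF \<open>finite A\<close>] by simp
    also have "\<dots> \<le> (\<Sum>a\<in>A. d)"
    proof (rule sum_mono)
      fix a
      have "card (Pair a ` {b \<in> A. b div d = a div d}) \<le> card {b \<in> A. b div d = a div d}"
        by (rule card_image_le) (simp add: \<open>finite A\<close>)
      then show "card (Pair a ` {b \<in> A. b div d = a div d}) \<le> d"
        using card_block_le[OF \<open>d > 0\<close>, of A "a div d"] by linarith
    qed
    finally show ?thesis by (simp add: mult.commute)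
  qed
  ultimately show ?thesis unfolding Up_def by simp
qed

locale block_orthonormal_rows =
  fixes y :: "nat \<Rightarrow> nat \<Rightarrow> real" and n d p :: nat
  assumes d_pos: "d > 0"
    and orthonormal: "\<And>a b. a < n \<Longrightarrow> b < n \<Longrightarrow> a div d = b div d \<Longrightarrow>
       (\<Sum>l<p. y a l * y b l) = (if a = b then 1 else 0)"
begin

lemma block_combination_zero:
  assumes supp: "\<And>b. h b \<noteq> 0 \<Longrightarrow> b < n \<and> b div d = k"
    and comb: "\<And>l. l < p \<Longrightarrow> (\<Sum>b<n. h b * y b l) = 0"
  shows "h c = 0"
proof (rule ccontr)
  assume hc: "h c \<noteq> 0"
  then have c: "c < n" "c div d = k" using supp by auto
  have "0 = (\<Sum>l<p. (\<Sum>b<n. h b * y b l) * y c l)" using comb by simp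
  also have "\<dots> = (\<Sum>b<n. h b * (\<Sum>l<p. y b l * y c l))"
    by (simp add: sum_distrib_left sum_distrib_right sum.swap[of _ "{..<n}" "{..<p}"] algebra_simps)
  also have "\<dots> = (\<Sum>b<n. if b = c then h b else 0)"
  proof (intro sum.cong refl)
    fix b assume "b \<in> {..<n}"
    then show "h b * (\<Sum>l<p. y b l * y c l) = (if b = c then h b else 0)"
      using supp[of b] orthonormal[of b c] c by (cases "h b = 0") auto
  qed
  also have "\<dots> = h c" using c by simp
  finally show False using hc by simp
qed

text \<open>The rows that are not combinations of earlier rows form a basis of the row space, in which
  every row expands with a lower triangular coefficient matrix \<open>basis_coeff\<close>.\<close>
definition redundant :: "nat \<Rightarrow> bool" where
  "redundant i \<longleftrightarrow> (\<exists>c. \<forall>l<p. y i l = (\<Sum>j<i. c j * y j l))"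

definition basis_rows :: "nat set" where
  "basis_rows = {i. i < n \<and> \<not> redundant i}"

definition redundant_rows :: "nat set" where
  "redundant_rows = {i. i < n \<and> redundant i}"

lemma finite_basis_rows [simp]: "finite basis_rows"
  unfolding basis_rows_def by simp

lemma finite_redundant_rows [simp]: "finite redundant_rows"
  unfolding redundant_rows_def by simp

lemma card_basis_rows_redundant_rows: "card basis_rows + card redundant_rows = n"
proof -
  have "basis_rows \<union> redundant_rows = {..<n}" "basis_rows \<inter> redundant_rows = {}"
    unfolding basis_rows_def redundant_rows_def by auto
  then show ?thesis using card_Un_disjoint[of basis_rows redundant_rows] by simp
qed

lemma basis_rows_independent:
  assumes "\<And>l. l < p \<Longrightarrow> (\<Sum>\<nu>\<in>basis_rows. w \<nu> * y \<nu> l) = 0" and "\<nu> \<in> basis_rows"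
  shows "w \<nu> = 0"
proof (rule ccontr)
  assume "w \<nu> \<noteq> 0"
  define S where "S = {\<nu>\<in>basis_rows. w \<nu> \<noteq> 0}"
  have "finite S" "S \<noteq> {}" using \<open>\<nu> \<in> basis_rows\<close> \<open>w \<nu> \<noteq> 0\<close> unfolding S_def by auto
  define m where "m = Max S"
  have mS: "m \<in> S" and mmax: "\<And>x. x \<in> S \<Longrightarrow> x \<le> m"
    unfolding m_def using \<open>finite S\<close> \<open>S \<noteq> {}\<close> by auto
  have wm: "w m \<noteq> 0" and m_basis: "m \<in> basis_rows" using mS unfolding S_def by auto
  \<comment> \<open>the last row with a nonzero coefficient would be a combination of earlier rows\<close>
  define c where "c j = (if j \<in> S then - w j / w m else 0)" for j
  have "redundant m" unfolding redundant_def
  proof (intro exI allI impI)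
    fix l assume "l < p"
    have "0 = (\<Sum>\<nu>\<in>basis_rows. w \<nu> * y \<nu> l)" using assms(1) \<open>l < p\<close> by simp
    also have "\<dots> = (\<Sum>\<nu>\<in>S. w \<nu> * y \<nu> l)"
      unfolding S_def by (rule sum.mono_neutral_right) auto
    also have "\<dots> = w m * y m l + (\<Sum>\<nu>\<in>S - {m}. w \<nu> * y \<nu> l)"
      using mS \<open>finite S\<close> by (simp add: sum.remove)
    finally have eq: "y m l = - (\<Sum>\<nu>\<in>S - {m}. w \<nu> * y \<nu> l) / w m"
      using wm by (simp add: field_simps)
    have "(\<Sum>j<m. c j * y j l) = (\<Sum>j\<in>S - {m}. c j * y j l)"
    proof (rule sum.mono_neutral_cong_right)
      show "S - {m} \<subseteq> {..<m}" using mmax by force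
    qed (auto simp: c_def)
    also have "\<dots> = (\<Sum>j\<in>S - {m}. - (w j * y j l) / w m)"
      by (intro sum.cong refl) (auto simp: c_def)
    also have "\<dots> = y m l" unfolding eq by (simp add: sum_divide_distrib sum_negf)
    finally show "y m l = (\<Sum>j<m. c j * y j l)" by simp
  qed
  then show False using m_basis unfolding basis_rows_def by simp
qed

definition basis_expansion :: "nat \<Rightarrow> (nat \<Rightarrow> real) \<Rightarrow> bool" where
  "basis_expansion a r \<longleftrightarrow> (\<forall>l<p. y a l = (\<Sum>\<nu>\<in>basis_rows. r \<nu> * y \<nu> l))
     \<and> (\<forall>\<nu>. a < \<nu> \<longrightarrow> r \<nu> = 0) \<and> (a \<in> basis_rows \<longrightarrow> r = (\<lambda>\<nu>. if \<nu> = a then 1 else 0))"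

lemma basis_expansion_exists: "a < n \<Longrightarrow> \<exists>r. basis_expansion a r"
proof (induction a rule: less_induct)
  case (less a)
  show ?case
  proof (cases "a \<in> basis_rows")
    case True
    have "(\<Sum>\<nu>\<in>basis_rows. (if \<nu> = a then 1 else 0) * y \<nu> l) = y a l" for l
    proof -
      have "(\<Sum>\<nu>\<in>basis_rows. (if \<nu> = a then 1 else 0) * y \<nu> l)
          = (\<Sum>\<nu>\<in>basis_rows. if \<nu> = a then y \<nu> l else 0)"
        by (intro sum.cong) auto
      then show ?thesis using True by simp
    qed
    then have "basis_expansion a (\<lambda>\<nu>. if \<nu> = a then 1 else 0)"
      unfolding basis_expansion_def using True by simp
    then show ?thesis by blast
  next
    case False
    then have "redundant a" using less.prems unfolding basis_rows_def by simp
    then obtain c where c: "\<And>l. l < p \<Longrightarrow> y a l = (\<Sum>j<a. c j * y j l)"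
      unfolding redundant_def by blast
    have "\<forall>j\<in>{..<a}. \<exists>r. basis_expansion j r" using less by auto
    then obtain rr where rr: "\<And>j. j < a \<Longrightarrow> basis_expansion j (rr j)" by (metis lessThan_iff)
    define r where "r \<nu> = (\<Sum>j<a. c j * rr j \<nu>)" for \<nu>
    have "basis_expansion a r" unfolding basis_expansion_def
    proof (intro conjI allI impI)
      fix l assume l: "l < p"
      have "y a l = (\<Sum>j<a. c j * (\<Sum>\<nu>\<in>basis_rows. rr j \<nu> * y \<nu> l))"
        using c[OF l] rr l unfolding basis_expansion_def by simp
      also have "\<dots> = (\<Sum>\<nu>\<in>basis_rows. r \<nu> * y \<nu> l)" unfolding r_def
        by (simp add: sum_distrib_left sum_distrib_right mult.assoc sum.swap[of _ basis_rows])
      finally show "y a l = (\<Sum>\<nu>\<in>basis_rows. r \<nu> * y \<nu> l)" .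
    next
      fix \<nu> assume "a < \<nu>"
      then show "r \<nu> = 0" unfolding r_def using rr unfolding basis_expansion_def by simp
    next
      assume "a \<in> basis_rows"
      then show "r = (\<lambda>\<nu>. if \<nu> = a then 1 else 0)" using False by simp
    qed
    then show ?thesis by blast
  qed
qed

definition basis_coeff :: "nat \<Rightarrow> nat \<Rightarrow> real" where
  "basis_coeff a = (SOME r. basis_expansion a r)"

lemma basis_expansion_basis_coeff: "a < n \<Longrightarrow> basis_expansion a (basis_coeff a)"
  unfolding basis_coeff_def using basis_expansion_exists by (rule someI_ex)

lemma row_basis_expansion:
  "a < n \<Longrightarrow> l < p \<Longrightarrow> y a l = (\<Sum>\<nu>\<in>basis_rows. basis_coeff a \<nu> * y \<nu> l)"
  using basis_expansion_basis_coeff unfolding basis_expansion_def by blast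

lemma basis_coeff_above: "a < n \<Longrightarrow> a < \<nu> \<Longrightarrow> basis_coeff a \<nu> = 0"
  using basis_expansion_basis_coeff unfolding basis_expansion_def by blast

lemma basis_coeff_basis_row: "a \<in> basis_rows \<Longrightarrow> basis_coeff a \<nu> = (if \<nu> = a then 1 else 0)"
  using basis_expansion_basis_coeff unfolding basis_expansion_def basis_rows_def by auto

lemma basis_coeff_form_zero:
  assumes EM: "\<And>l m. l < p \<Longrightarrow> m < p \<Longrightarrow> (\<Sum>a<n. \<Sum>b<n. E a b * y a l * y b m) = 0"
    and "\<nu> \<in> basis_rows" "m < p"
  shows "(\<Sum>b<n. (\<Sum>a<n. basis_coeff a \<nu> * E a b) * y b m) = 0"
proof -
  define w where "w a = (\<Sum>b<n. E a b * y b m)" for a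
  have "(\<Sum>\<mu>\<in>basis_rows. (\<Sum>a<n. basis_coeff a \<mu> * w a) * y \<mu> l) = 0" if "l < p" for l
  proof -
    have "(\<Sum>\<mu>\<in>basis_rows. (\<Sum>a<n. basis_coeff a \<mu> * w a) * y \<mu> l)
        = (\<Sum>a<n. w a * (\<Sum>\<mu>\<in>basis_rows. basis_coeff a \<mu> * y \<mu> l))"
      by (simp add: sum_distrib_left sum_distrib_right sum.swap[of _ basis_rows] mult_ac)
    also have "\<dots> = (\<Sum>a<n. w a * y a l)"
      using row_basis_expansion \<open>l < p\<close> by simp
    also have "\<dots> = (\<Sum>a<n. \<Sum>b<n. E a b * y a l * y b m)"
      by (simp add: w_def sum_distrib_left sum_distrib_right mult_ac)
    finally show ?thesis using EM \<open>l < p\<close> \<open>m < p\<close> by simp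
  qed
  then have "(\<Sum>a<n. basis_coeff a \<nu> * w a) = 0"
    using \<open>\<nu> \<in> basis_rows\<close> by (rule basis_rows_independent)
  moreover have "(\<Sum>b<n. (\<Sum>a<n. basis_coeff a \<nu> * E a b) * y b m) = (\<Sum>a<n. basis_coeff a \<nu> * w a)"
  proof -
    have "(\<Sum>b<n. (\<Sum>a<n. basis_coeff a \<nu> * E a b) * y b m)
        = (\<Sum>b<n. \<Sum>a<n. basis_coeff a \<nu> * E a b * y b m)"
      by (simp add: sum_distrib_right)
    also have "\<dots> = (\<Sum>a<n. \<Sum>b<n. basis_coeff a \<nu> * E a b * y b m)"
      by (rule sum.swap)
    finally show ?thesis by (simp add: w_def sum_distrib_left mult.assoc)
  qed
  ultimately show ?thesis by simp
qed

lemma basis_coeff_sum_split: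
  assumes "\<nu> \<in> basis_rows"
  shows "(\<Sum>a<n. basis_coeff a \<nu> * E a b) = E \<nu> b + (\<Sum>a\<in>redundant_rows. basis_coeff a \<nu> * E a b)"
proof -
  have "{..<n} = basis_rows \<union> redundant_rows" "basis_rows \<inter> redundant_rows = {}"
    unfolding basis_rows_def redundant_rows_def by auto
  then have "(\<Sum>a<n. basis_coeff a \<nu> * E a b) = (\<Sum>a\<in>basis_rows. basis_coeff a \<nu> * E a b)
      + (\<Sum>a\<in>redundant_rows. basis_coeff a \<nu> * E a b)"
    by (simp add: sum.union_disjoint)
  moreover have "(\<Sum>a\<in>basis_rows. basis_coeff a \<nu> * E a b) = (\<Sum>a\<in>basis_rows. if a = \<nu> then E a b else 0)"
    by (intro sum.cong refl) (simp add: basis_coeff_basis_row)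
  ultimately show ?thesis using assms by simp
qed

text \<open>The congruence \<open>E \<mapsto> Y\<^sup>T E Y\<close> is injective on symmetric block diagonal forms that
  vanish on pairs of redundant rows. The proof runs downward over the blocks.\<close>
context
  fixes E :: "nat \<Rightarrow> nat \<Rightarrow> real"
  assumes sym: "\<And>a b. E a b = E b a"
    and block_supp: "\<And>a b. E a b \<noteq> 0 \<Longrightarrow> a < n \<and> b < n \<and> a div d = b div d"
    and redundant_zero: "\<And>a b. a \<in> redundant_rows \<Longrightarrow> b \<in> redundant_rows \<Longrightarrow> E a b = 0"
    and congruence_zero: "\<And>l m. l < p \<Longrightarrow> m < p \<Longrightarrow> (\<Sum>a<n. \<Sum>b<n. E a b * y a l * y b m) = 0"
begin

lemma basis_coeff_combination_zero:
  assumes later: "\<And>a b. k < a div d \<Longrightarrow> E a b = 0"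
    and \<nu>: "\<nu> \<in> basis_rows" "\<nu> div d = k"
  shows "(\<Sum>a<n. basis_coeff a \<nu> * E a b) = 0"
proof -
  define h where "h b = (\<Sum>a<n. basis_coeff a \<nu> * E a b)" for b
  have "h b = 0"
  proof (rule block_combination_zero)
    fix b assume "h b \<noteq> 0"
    then obtain a where a: "a < n" "basis_coeff a \<nu> * E a b \<noteq> 0"
      unfolding h_def by (metis (mono_tags, lifting) lessThan_iff sum.neutral)
    \<comment> \<open>the coefficient matrix is lower triangular and the later blocks of \<open>E\<close> vanish\<close>
    then have "\<nu> \<le> a" using basis_coeff_above by (metis mult_zero_left not_le)
    then have "k \<le> a div d" using \<nu>(2) div_le_mono by metis
    moreover have "\<not> k < a div d" using later a(2) by auto
    ultimately show "b < n \<and> b div d = k" using block_supp[of a b] a(2) by auto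
  next
    fix l assume "l < p"
    show "(\<Sum>b<n. h b * y b l) = 0"
      using basis_coeff_form_zero[OF congruence_zero \<nu>(1) \<open>l < p\<close>] unfolding h_def .
  qed
  then show ?thesis unfolding h_def .
qed

lemma basis_redundant_entry_zero:
  assumes later: "\<And>a b. k < a div d \<Longrightarrow> E a b = 0"
    and \<nu>: "\<nu> \<in> basis_rows" "\<nu> div d = k" and "b \<in> redundant_rows"
  shows "E \<nu> b = 0"
proof -
  have "(\<Sum>a\<in>redundant_rows. basis_coeff a \<nu> * E a b) = 0"
    using redundant_zero \<open>b \<in> redundant_rows\<close> by simp
  then show ?thesis
    using basis_coeff_combination_zero[OF later \<nu>, of b] basis_coeff_sum_split[OF \<nu>(1), of E b] by simp
qed

lemma basis_entry_zero:
  assumes later: "\<And>a b. k < a div d \<Longrightarrow> E a b = 0"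
    and \<nu>: "\<nu> \<in> basis_rows" "\<nu> div d = k"
  shows "E \<nu> b = 0"
proof (cases "b \<in> redundant_rows")
  case True
  then show ?thesis using basis_redundant_entry_zero[OF later \<nu>] by blast
next
  case False
  have "(\<Sum>a\<in>redundant_rows. basis_coeff a \<nu> * E a b) = 0"
  proof (rule sum.neutral, rule ballI, rule ccontr)
    fix a assume a: "a \<in> redundant_rows" and ne: "basis_coeff a \<nu> * E a b \<noteq> 0"
    then have "\<nu> \<le> a" using basis_coeff_above unfolding redundant_rows_def
      by (metis mem_Collect_eq mult_zero_left not_le)
    then have "k \<le> a div d" using \<nu>(2) div_le_mono by metis
    moreover have "\<not> k < a div d" using later ne by auto
    ultimately have b: "b < n" "b div d = k" using block_supp[of a b] ne by auto
    then have "b \<in> basis_rows" using False unfolding basis_rows_def redundant_rows_def by simp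
    then have "E b a = 0" using basis_redundant_entry_zero[OF later _ b(2) a] by blast
    then show False using ne sym[of a b] by simp
  qed
  then show ?thesis
    using basis_coeff_combination_zero[OF later \<nu>, of b] basis_coeff_sum_split[OF \<nu>(1), of E b] by simp
qed

lemma block_vanishes:
  assumes later: "\<And>a b. k < a div d \<Longrightarrow> E a b = 0" and "a div d = k"
  shows "E a b = 0"
proof (rule ccontr)
  assume ne: "E a b \<noteq> 0"
  then have ab: "a < n" "b < n" "a div d = b div d" using block_supp by auto
  consider "a \<in> basis_rows" | "b \<in> basis_rows" | "a \<in> redundant_rows" "b \<in> redundant_rows"
    using ab unfolding basis_rows_def redundant_rows_def by auto
  then show False
  proof cases
    case 1
    then show False using basis_entry_zero[OF later] \<open>a div d = k\<close> ne by blast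
  next
    case 2
    then have "E b a = 0" using basis_entry_zero[OF later] \<open>a div d = k\<close> ab(3) by simp
    then show False using ne sym[of a b] by simp
  next
    case 3
    then show False using redundant_zero ne by blast
  qed
qed

lemma block_form_zero: "E a b = 0"
proof -
  have "\<forall>a b. k \<le> a div d \<longrightarrow> E a b = 0" if "k \<le> n" for k
    using that
  proof (induction k rule: inc_induct)
    case base
    have "a div d \<le> a" for a by (simp add: div_le_dividend)
    then show ?case using block_supp by (meson le_trans not_less)
  next
    case (step k)
    then show ?case using block_vanishes[of k] by (metis Suc_leI le_neq_implies_less)
  qed
  from this[of 0] show ?thesis by simp
qed

end

text \<open>With \<open>Y\<close> the matrix with rows \<open>y\<close>, \<open>compress E = Y\<^sup>T E Y\<close> and \<open>sandwich Q = Y Q Y\<^sup>T\<close>.\<close>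
definition compress :: "(nat \<Rightarrow> nat \<Rightarrow> real) \<Rightarrow> nat \<Rightarrow> nat \<Rightarrow> real" where
  "compress E k l = (\<Sum>a<n. \<Sum>b<n. y a k * E a b * y b l)"

definition sandwich :: "(nat \<Rightarrow> nat \<Rightarrow> real) \<Rightarrow> nat \<Rightarrow> nat \<Rightarrow> real" where
  "sandwich Q i j = (\<Sum>k<p. \<Sum>l<p. y i k * Q k l * y j l)"

lemma compress_sym: "(\<And>a b. E a b = E b a) \<Longrightarrow> compress E k l = compress E l k"
  unfolding compress_def by (rule sum_bilinear_sym)

lemma sandwich_sym: "(\<And>k l. Q k l = Q l k) \<Longrightarrow> sandwich Q i j = sandwich Q j i"
  unfolding sandwich_def using sum_bilinear_sym[where M = Q and A = "{..<p}" and f = "\<lambda>k i. y i k"]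
  by simp

lemma sandwich_compress_add:
  "sandwich (compress (\<lambda>a b. E a b + E' a b)) i j = sandwich (compress E) i j + sandwich (compress E') i j"
  unfolding sandwich_def compress_def by (simp add: algebra_simps sum.distrib)

lemma sandwich_compress_scale:
  "sandwich (compress (\<lambda>a b. c * E a b)) i j = c * sandwich (compress E) i j"
  unfolding sandwich_def compress_def by (simp add: algebra_simps sum_distrib_left)

lemma sum_squares_compress:
  "(\<Sum>k<p. \<Sum>l<p. (compress E k l)\<^sup>2) = (\<Sum>a<n. \<Sum>b<n. E a b * sandwich (compress E) a b)"
proof -
  have "(compress E k l)\<^sup>2 = (\<Sum>a<n. \<Sum>b<n. E a b * (y a k * compress E k l * y b l))" for k l
  proof -
    have "(compress E k l)\<^sup>2 = compress E k l * (\<Sum>a<n. \<Sum>b<n. y a k * E a b * y b l)"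
      by (simp only: power2_eq_square compress_def)
    then show ?thesis by (simp add: sum_distrib_left mult_ac)
  qed
  then have "(\<Sum>k<p. \<Sum>l<p. (compress E k l)\<^sup>2)
      = (\<Sum>k<p. \<Sum>l<p. \<Sum>a<n. \<Sum>b<n. E a b * (y a k * compress E k l * y b l))"
    by simp
  also have "\<dots> = (\<Sum>a<n. \<Sum>b<n. \<Sum>k<p. \<Sum>l<p. E a b * (y a k * compress E k l * y b l))"
    by (rule sum_swap_pairs)
  also have "\<dots> = (\<Sum>a<n. \<Sum>b<n. E a b * sandwich (compress E) a b)"
    by (simp add: sandwich_def sum_distrib_left)
  finally show ?thesis .
qed

definition block_pairs :: "(nat \<times> nat) set" where
  "block_pairs = {(a,b). a \<le> b \<and> b < n \<and> a div d = b div d}"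

definition redundant_pairs :: "(nat \<times> nat) set" where
  "redundant_pairs = {(a,b) \<in> block_pairs. a \<in> redundant_rows \<and> b \<in> redundant_rows}"

definition sym_block_form :: "(nat \<times> nat \<Rightarrow> real) \<Rightarrow> nat \<Rightarrow> nat \<Rightarrow> real" where
  "sym_block_form e a b =
     (if (a,b) \<in> block_pairs then e (a,b) else if (b,a) \<in> block_pairs then e (b,a) else 0)"

lemma finite_block_pairs [simp]: "finite block_pairs"
  by (rule finite_subset[of _ "{..<n} \<times> {..<n}"]) (auto simp: block_pairs_def)

lemma sym_block_form_sym: "sym_block_form e a b = sym_block_form e b a"
  unfolding sym_block_form_def block_pairs_def by auto

lemma sym_block_form_nonzero:
  assumes "sym_block_form e a b \<noteq> 0"
  shows "a < n \<and> b < n \<and> a div d = b div d"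
proof -
  have "(a,b) \<in> block_pairs \<or> (b,a) \<in> block_pairs"
    using assms unfolding sym_block_form_def by metis
  then show ?thesis unfolding block_pairs_def by auto
qed

lemma card_redundant_pairs: "2 * card redundant_pairs \<le> (d+1) * card redundant_rows"
proof -
  have "redundant_pairs = {(a,b). a \<in> redundant_rows \<and> b \<in> redundant_rows \<and> a \<le> b \<and> a div d = b div d}"
    unfolding redundant_pairs_def block_pairs_def redundant_rows_def by auto
  then show ?thesis using card_block_pairs_le[OF finite_redundant_rows d_pos] by simp
qed

lemma card_redundant_pairs_less:
  assumes rank: "p \<le> card basis_rows" and count: "(d+1)*n < (d+3)*p"
  shows "card redundant_pairs < p"
proof -
  have "(d+1) * card redundant_rows + (d+1) * card basis_rows = (d+1) * n"
    using card_basis_rows_redundant_rows by (metis add.commute add_mult_distrib2)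
  moreover have "(d+1) * p \<le> (d+1) * card basis_rows" using rank by (rule mult_le_mono2)
  moreover have "(d+3) * p = (d+1) * p + 2 * p" by (simp add: algebra_simps)
  ultimately show ?thesis using card_redundant_pairs count by linarith
qed

lemma sym_block_form_zero:
  assumes sandwich_zero: "\<And>i j. (i,j) \<in> block_pairs \<Longrightarrow> sandwich (compress (sym_block_form e)) i j = 0"
    and redundant_zero: "\<And>\<omega>. \<omega> \<in> redundant_pairs \<Longrightarrow> e \<omega> = 0"
    and "\<omega> \<in> block_pairs"
  shows "e \<omega> = 0"
proof -
  define E where "E = sym_block_form e"
  have sym: "E a b = E b a" for a b unfolding E_def by (rule sym_block_form_sym)
  have product_zero: "E a b * sandwich (compress E) a b = 0" for a b
  proof (cases "(a,b) \<in> block_pairs \<or> (b,a) \<in> block_pairs")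
    case True
    moreover have "sandwich (compress E) a b = sandwich (compress E) b a"
      by (rule sandwich_sym) (rule compress_sym[OF sym])
    ultimately show ?thesis using sandwich_zero unfolding E_def by auto
  qed (simp add: E_def sym_block_form_def)
  have "(\<Sum>k<p. \<Sum>l<p. (compress E k l)\<^sup>2) = 0"
    unfolding sum_squares_compress product_zero by simp
  then have compress_zero: "compress E k l = 0" if "k < p" "l < p" for k l
    using that by (simp add: sum_nonneg_eq_0_iff sum_nonneg)
  have E_zero: "E a b = 0" for a b
  proof (rule block_form_zero)
    show "E a b = E b a" for a b by (rule sym)
    show "E a b \<noteq> 0 \<Longrightarrow> a < n \<and> b < n \<and> a div d = b div d" for a b
      unfolding E_def by (rule sym_block_form_nonzero)
    show "E a b = 0" if "a \<in> redundant_rows" "b \<in> redundant_rows" for a b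
      using that redundant_zero unfolding E_def sym_block_form_def redundant_pairs_def by auto
    show "(\<Sum>a<n. \<Sum>b<n. E a b * y a l * y b m) = 0" if "l < p" "m < p" for l m
      using compress_zero[OF that] unfolding compress_def by (simp add: mult_ac)
  qed
  obtain a b where "\<omega> = (a,b)" by (cases \<omega>)
  then have "e \<omega> = E a b"
    using \<open>\<omega> \<in> block_pairs\<close> unfolding E_def sym_block_form_def by simp
  then show ?thesis using E_zero by simp
qed

lemma sym_block_form_add:
  "sym_block_form (\<lambda>\<omega>. e \<omega> + e' \<omega>) = (\<lambda>a b. sym_block_form e a b + sym_block_form e' a b)"
  by (simp add: fun_eq_iff sym_block_form_def)

lemma sym_block_form_scale: "sym_block_form (\<lambda>\<omega>. c * e \<omega>) = (\<lambda>a b. c * sym_block_form e a b)"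
  by (simp add: fun_eq_iff sym_block_form_def)

lemma tangent_direction_rank_deficient:
  assumes "card basis_rows < p"
  shows "\<exists>z. (\<exists>l<p. z l \<noteq> 0) \<and> (\<forall>a<n. (\<Sum>l<p. y a l * z l) = 0)"
proof -
  have "\<exists>z. (\<exists>l\<in>{..<p}. z l \<noteq> 0) \<and> (\<forall>\<nu>\<in>basis_rows. (\<Sum>l<p. y \<nu> l * z l) = 0)"
    by (rule linear_system_nontrivial_solution)
      (use assms in \<open>auto simp: sum.distrib algebra_simps sum_distrib_left\<close>)
  then obtain z where z: "\<exists>l<p. z l \<noteq> 0" and basis_orth: "\<And>\<nu>. \<nu> \<in> basis_rows \<Longrightarrow> (\<Sum>l<p. y \<nu> l * z l) = 0"
    by auto
  have "(\<Sum>l<p. y a l * z l) = 0" if "a < n" for a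
  proof -
    have "(\<Sum>l<p. y a l * z l) = (\<Sum>l<p. \<Sum>\<nu>\<in>basis_rows. basis_coeff a \<nu> * y \<nu> l * z l)"
      using row_basis_expansion[OF that] by (simp add: sum_distrib_right)
    also have "\<dots> = (\<Sum>\<nu>\<in>basis_rows. basis_coeff a \<nu> * (\<Sum>l<p. y \<nu> l * z l))"
      by (simp add: sum.swap[of _ "{..<p}" basis_rows] sum_distrib_left mult.assoc)
    also have "\<dots> = 0" using basis_orth by simp
    finally show ?thesis .
  qed
  with z show ?thesis by blast
qed

text \<open>The unknowns are \<open>z\<close> and the entries of \<open>E\<close> on or above the diagonal of the diagonal
  blocks; the equations are the tangency conditions together with \<open>E = 0\<close> on the redundant
  pairs. By \<open>card_redundant_pairs_less\<close> there are more unknowns than equations, and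
  \<open>sym_block_form_zero\<close> shows that a nonzero solution has \<open>z \<noteq> 0\<close>.\<close>
lemma tangent_direction_full_rank:
  assumes rank: "p \<le> card basis_rows" and count: "(d+1)*n < (d+3)*p"
  shows "\<exists>z E. (\<exists>l<p. z l \<noteq> 0) \<and> (\<forall>a b. E a b = E b a) \<and> (\<forall>i j. (i,j) \<in> block_pairs \<longrightarrow>
     v i * (\<Sum>l<p. y j l * z l) + v j * (\<Sum>l<p. y i l * z l) + sandwich (compress E) i j = 0)"
proof -
  define I :: "((nat \<times> nat) + (nat \<times> nat)) set" where "I = Inl ` block_pairs \<union> Inr ` redundant_pairs"
  define J :: "(nat + (nat \<times> nat)) set" where "J = Inl ` {..<p} \<union> Inr ` block_pairs"
  define eqn :: "(nat \<times> nat) + (nat \<times> nat) \<Rightarrow> (nat + (nat \<times> nat) \<Rightarrow> real) \<Rightarrow> real" where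
    "eqn \<iota> x = (case \<iota> of
        Inl (i,j) \<Rightarrow> v i * (\<Sum>l<p. y j l * x (Inl l)) + v j * (\<Sum>l<p. y i l * x (Inl l))
          + sandwich (compress (sym_block_form (\<lambda>\<omega>. x (Inr \<omega>)))) i j
      | Inr \<omega> \<Rightarrow> x (Inr \<omega>))" for \<iota> x
  have sub: "redundant_pairs \<subseteq> block_pairs" unfolding redundant_pairs_def by auto
  have "card redundant_pairs < p" by (rule card_redundant_pairs_less[OF rank count])
  moreover have "card I = card block_pairs + card redundant_pairs"
    unfolding I_def using sub by (subst card_Un_disjoint) (auto simp: card_image finite_subset)
  moreover have "card J = p + card block_pairs"
    unfolding J_def by (subst card_Un_disjoint) (auto simp: card_image)
  ultimately have "card I < card J" by simp
  moreover have "finite I" "finite J" unfolding I_def J_def using sub by (auto intro: finite_subset)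
  moreover have "eqn \<iota> (\<lambda>j. x j + x' j) = eqn \<iota> x + eqn \<iota> x'" for \<iota> x x'
    by (cases \<iota>) (simp_all add: eqn_def split_beta sym_block_form_add sandwich_compress_add
        sum.distrib algebra_simps)
  moreover have "eqn \<iota> (\<lambda>j. c * x j) = c * eqn \<iota> x" for \<iota> x c
    by (cases \<iota>) (simp_all add: eqn_def split_beta sym_block_form_scale sandwich_compress_scale
        sum_distrib_left algebra_simps)
  ultimately obtain x where x_nz: "\<exists>j\<in>J. x j \<noteq> 0" and x_eq: "\<And>\<iota>. \<iota> \<in> I \<Longrightarrow> eqn \<iota> x = 0"
    using linear_system_nontrivial_solution[of I J eqn] by blast
  define z where "z = (\<lambda>l. x (Inl l))"
  define e where "e = (\<lambda>\<omega>. x (Inr \<omega>))"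
  have pair_eq: "v i * (\<Sum>l<p. y j l * z l) + v j * (\<Sum>l<p. y i l * z l)
      + sandwich (compress (sym_block_form e)) i j = 0" if "(i,j) \<in> block_pairs" for i j
    using x_eq[of "Inl (i,j)"] that unfolding I_def eqn_def z_def e_def by simp
  have e_redundant: "e \<omega> = 0" if "\<omega> \<in> redundant_pairs" for \<omega>
    using x_eq[of "Inr \<omega>"] that unfolding I_def eqn_def e_def by simp
  have "\<exists>l<p. z l \<noteq> 0"
  proof (rule ccontr)
    assume "\<not> (\<exists>l<p. z l \<noteq> 0)"
    then have z0: "z l = 0" if "l < p" for l using that by blast
    have e0: "e \<omega> = 0" if "\<omega> \<in> block_pairs" for \<omega>
    proof (rule sym_block_form_zero[OF _ e_redundant that])
      fix i j assume "(i,j) \<in> block_pairs"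
      then show "sandwich (compress (sym_block_form e)) i j = 0" using pair_eq[of i j] z0 by simp
    qed
    have "x \<iota> = 0" if "\<iota> \<in> J" for \<iota>
      using that z0 e0 unfolding J_def z_def e_def by auto
    then show False using x_nz by blast
  qed
  moreover have "sym_block_form e a b = sym_block_form e b a" for a b
    by (rule sym_block_form_sym)
  ultimately show ?thesis using pair_eq by blast
qed

lemma exists_tangent_direction:
  assumes "(d+1)*n < (d+3)*p"
  shows "\<exists>z Q. (\<exists>l<p. z l \<noteq> 0) \<and> (\<forall>i<n. \<forall>j<n. i div d = j div d \<longrightarrow>
     v i * (\<Sum>l<p. y j l * z l) + v j * (\<Sum>l<p. y i l * z l) + sandwich Q i j + sandwich Q j i = 0)"
proof (cases "card basis_rows < p")
  case True
  then obtain z where z: "\<exists>l<p. z l \<noteq> 0" and orth: "\<And>a. a < n \<Longrightarrow> (\<Sum>l<p. y a l * z l) = 0"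
    using tangent_direction_rank_deficient by blast
  have "\<forall>i<n. \<forall>j<n. i div d = j div d \<longrightarrow> v i * (\<Sum>l<p. y j l * z l) + v j * (\<Sum>l<p. y i l * z l)
      + sandwich (\<lambda>_ _. 0) i j + sandwich (\<lambda>_ _. 0) j i = 0"
    using orth by (simp add: sandwich_def)
  with z show ?thesis by blast
next
  case False
  then have "p \<le> card basis_rows" by simp
  then obtain z E where z: "\<exists>l<p. z l \<noteq> 0" and sym: "\<And>a b. E a b = E b a"
    and pair_eq: "\<And>i j. (i,j) \<in> block_pairs \<Longrightarrow>
      v i * (\<Sum>l<p. y j l * z l) + v j * (\<Sum>l<p. y i l * z l) + sandwich (compress E) i j = 0"
    using tangent_direction_full_rank[OF _ assms, of v] by blast
  define Q where "Q k l = compress E k l / 2" for k l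
  have sandwich_Q: "sandwich Q i j + sandwich Q j i = sandwich (compress E) i j" for i j
  proof -
    have half: "sandwich Q a b = sandwich (compress E) a b / 2" for a b
      unfolding Q_def sandwich_def by (simp add: sum_divide_distrib)
    have "sandwich (compress E) j i = sandwich (compress E) i j"
      by (rule sandwich_sym) (rule compress_sym[OF sym])
    then show ?thesis using half[of i j] half[of j i] by linarith
  qed
  have "v i * (\<Sum>l<p. y j l * z l) + v j * (\<Sum>l<p. y i l * z l) + sandwich Q i j + sandwich Q j i = 0"
    if "i < n" "j < n" "i div d = j div d" for i j
  proof (cases "i \<le> j")
    case True
    then have "(i,j) \<in> block_pairs" using that unfolding block_pairs_def by simp
    then show ?thesis using pair_eq[of i j] sandwich_Q[of i j] by linarith
  next
    case False
    then have "(j,i) \<in> block_pairs" using that unfolding block_pairs_def by simp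
    then show ?thesis using pair_eq[of j i] sandwich_Q[of j i] by linarith
  qed
  with z show ?thesis by blast
qed

end

section \<open>The Burer--Monteiro problem\<close>

lemma mult_mat_entry:
  assumes "A \<in> carrier_mat a b" "B \<in> carrier_mat b c" "i < a" "j < c"
  shows "(A * B) $$ (i,j) = (\<Sum>k<b. A $$ (i,k) * B $$ (k,j))"
  using assms by (simp add: scalar_prod_def atLeast0LessThan)

lemma gram_entry:
  assumes "Z \<in> carrier_mat n p" "i < n" "j < n"
  shows "(Z * transpose_mat Z) $$ (i,j) = (\<Sum>l<p. Z $$ (i,l) * Z $$ (j,l))"
  using mult_mat_entry[of Z n p "transpose_mat Z" n i j] assms by simp

lemma frob_carrier:
  "A \<in> carrier_mat n m \<Longrightarrow> frob A B = (\<Sum>i<n. \<Sum>j<m. A $$ (i,j) * B $$ (i,j))"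
  unfolding frob_def by simp

lemma symmetric_sum_entry:
  assumes "A \<in> carrier_mat n p" "Y \<in> carrier_mat n p" "i < n" "j < n"
  shows "(A * transpose_mat Y + Y * transpose_mat A) $$ (i,j)
    = (\<Sum>l<p. A $$ (i,l) * Y $$ (j,l)) + (\<Sum>l<p. Y $$ (i,l) * A $$ (j,l))"
proof -
  have "(A * transpose_mat Y) $$ (i,j) = (\<Sum>l<p. A $$ (i,l) * Y $$ (j,l))"
    using mult_mat_entry[of A n p "transpose_mat Y" n i j] assms by simp
  moreover have "(Y * transpose_mat A) $$ (i,j) = (\<Sum>l<p. Y $$ (i,l) * A $$ (j,l))"
    using mult_mat_entry[of Y n p "transpose_mat A" n i j] assms by simp
  ultimately show ?thesis using assms by simp
qed

lemma bm_feasible_block_orthonormal_rows: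
  assumes feas: "bm_feasible q d p Y" and "d > 0"
  shows "block_orthonormal_rows (\<lambda>a l. Y $$ (a,l)) (q*d) d p"
proof
  fix a b assume a: "a < q*d" and b: "b < q*d" and ab: "a div d = b div d"
  define k where "k = a div d"
  have "k < q" using a \<open>d > 0\<close> unfolding k_def by (simp add: less_mult_imp_div_less)
  have a_eq: "a = k*d + a mod d" and b_eq: "b = k*d + b mod d"
    unfolding k_def using ab by (metis div_mult_mod_eq)+
  have "a mod d < d" "b mod d < d" using \<open>d > 0\<close> by auto
  then have "(\<Sum>l<p. Y $$ (k*d + a mod d, l) * Y $$ (k*d + b mod d, l)) = (if a mod d = b mod d then 1 else 0)"
    using feas \<open>k < q\<close> unfolding bm_feasible_def by blast
  moreover have "(a mod d = b mod d) = (a = b)" using a_eq b_eq by metis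
  ultimately show "(\<Sum>l<p. Y $$ (a,l) * Y $$ (b,l)) = (if a = b then 1 else 0)"
    using a_eq b_eq by metis
qed (rule \<open>d > 0\<close>)

lemma gram_block_identity:
  assumes "bm_feasible q d p Y" "d > 0" "i < q*d" "j < q*d" "same_block d i j"
  shows "(Y * transpose_mat Y) $$ (i,j) = (if i = j then 1 else 0)"
proof -
  interpret block_orthonormal_rows "\<lambda>a l. Y $$ (a,l)" "q*d" d p
    by (rule bm_feasible_block_orthonormal_rows[OF assms(1,2)])
  have "Y \<in> carrier_mat (q*d) p" using assms(1) unfolding bm_feasible_def by simp
  then show ?thesis
    using gram_entry[of Y "q*d" p i j] orthonormal[of i j] assms(3-5) unfolding same_block_def by simp
qed

text \<open>The multiplier \<open>\<Lambda> = sbd((C Y Y\<^sup>T + Y Y\<^sup>T C) / 2)\<close> of the constraints, so that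
  \<open>S(Y) = C - \<Lambda>\<close>.\<close>
definition multiplier :: "nat \<Rightarrow> real mat \<Rightarrow> real mat \<Rightarrow> real mat" where
  "multiplier d C Y = mat (dim_row Y) (dim_row Y) (\<lambda>(i,j). if same_block d i j
     then ((C * (Y * transpose_mat Y)) $$ (i,j) + (C * (Y * transpose_mat Y)) $$ (j,i)) / 2 else 0)"

lemma residual_gram_entry:
  assumes feas: "bm_feasible q d p Y" and "d > 0"
    and C: "C \<in> carrier_mat (q*d) (q*d)" and L: "L \<in> carrier_mat (q*d) (q*d)"
    and L_off: "\<And>i j. i < q*d \<Longrightarrow> j < q*d \<Longrightarrow> \<not> same_block d i j \<Longrightarrow> L $$ (i,j) = 0"
    and ab: "a < q*d" "b < q*d" "same_block d a b"
  shows "((C - L) * Y * transpose_mat Y) $$ (a,b) = (C * (Y * transpose_mat Y)) $$ (a,b) - L $$ (a,b)"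
proof -
  have Y: "Y \<in> carrier_mat (q*d) p" using feas unfolding bm_feasible_def by simp
  define G where "G = Y * transpose_mat Y"
  have G: "G \<in> carrier_mat (q*d) (q*d)" unfolding G_def using Y by simp
  have "C - L \<in> carrier_mat (q*d) (q*d)" using L by (rule minus_carrier_mat)
  then have "(C - L) * Y * transpose_mat Y = (C - L) * G"
    unfolding G_def using Y by (simp del: minus_mult_distrib_mat)
  also have "\<dots> = C * G - L * G" by (rule minus_mult_distrib_mat[OF C L G])
  finally have "(C - L) * Y * transpose_mat Y = C * G - L * G" .
  moreover have "(L * G) $$ (a,b) = L $$ (a,b)"
  proof -
    have "(L * G) $$ (a,b) = (\<Sum>k<q*d. L $$ (a,k) * G $$ (k,b))"
      by (rule mult_mat_entry[OF L G ab(1,2)])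
    also have "\<dots> = (\<Sum>k<q*d. if k = b then L $$ (a,k) else 0)"
    proof (intro sum.cong refl)
      fix k assume "k \<in> {..<q*d}"
      then show "L $$ (a,k) * G $$ (k,b) = (if k = b then L $$ (a,k) else 0)"
        using gram_block_identity[OF feas \<open>d > 0\<close>, of k b] L_off[of a k] ab
        unfolding G_def same_block_def by (cases "a div d = k div d") auto
    qed
    also have "\<dots> = L $$ (a,b)" using ab by simp
    finally show ?thesis .
  qed
  ultimately show ?thesis using C L G Y ab unfolding G_def by (simp add: carrier_matD)
qed

lemma tangent_residual_entry:
  assumes feas: "bm_feasible q d p Y" and "d > 0"
    and C: "C \<in> carrier_mat (q*d) (q*d)" and L: "block_diag_sym (q*d) d L"
    and ij: "i < q*d" "j < q*d" "same_block d i j"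
  shows "((C - L) * Y * transpose_mat Y + Y * transpose_mat ((C - L) * Y)) $$ (i,j)
    = (C * (Y * transpose_mat Y)) $$ (i,j) + (C * (Y * transpose_mat Y)) $$ (j,i) - 2 * L $$ (i,j)"
proof -
  have Y: "Y \<in> carrier_mat (q*d) p" using feas unfolding bm_feasible_def by simp
  have Lc: "L \<in> carrier_mat (q*d) (q*d)" and L_sym: "transpose_mat L = L"
    and L_off: "\<And>i j. i < q*d \<Longrightarrow> j < q*d \<Longrightarrow> \<not> same_block d i j \<Longrightarrow> L $$ (i,j) = 0"
    using L unfolding block_diag_sym_def by auto
  have R: "(C - L) * Y \<in> carrier_mat (q*d) p" using C Lc Y by (metis minus_carrier_mat mult_carrier_mat)
  have "same_block d j i" using ij(3) unfolding same_block_def by simp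
  have "L $$ (j,i) = L $$ (i,j)"
    using L_sym Lc ij by (metis carrier_matD index_transpose_mat(1))
  moreover have "((C - L) * Y * transpose_mat Y) $$ (a,b) = (\<Sum>l<p. ((C - L) * Y) $$ (a,l) * Y $$ (b,l))"
    if "a < q*d" "b < q*d" for a b
    using mult_mat_entry[OF R, of "transpose_mat Y" "q*d" a b] Y that by simp
  moreover have "(\<Sum>l<p. Y $$ (i,l) * ((C - L) * Y) $$ (j,l)) = (\<Sum>l<p. ((C - L) * Y) $$ (j,l) * Y $$ (i,l))"
    by (intro sum.cong refl) (rule mult.commute)
  ultimately show ?thesis
    unfolding symmetric_sum_entry[OF R Y ij(1,2)]
    using residual_gram_entry[OF feas \<open>d > 0\<close> C Lc L_off] ij \<open>same_block d j i\<close> by simp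
qed

lemma tangent_residual_iff:
  assumes feas: "bm_feasible q d p Y" and "d > 0"
    and C: "C \<in> carrier_mat (q*d) (q*d)" and L: "block_diag_sym (q*d) d L"
  shows "tangent d Y ((C - L) * Y) \<longleftrightarrow> (\<forall>i<q*d. \<forall>j<q*d. same_block d i j \<longrightarrow>
    L $$ (i,j) = ((C * (Y * transpose_mat Y)) $$ (i,j) + (C * (Y * transpose_mat Y)) $$ (j,i)) / 2)"
proof -
  define G where "G = C * (Y * transpose_mat Y)"
  have Y: "Y \<in> carrier_mat (q*d) p" using feas unfolding bm_feasible_def by simp
  have Lc: "L \<in> carrier_mat (q*d) (q*d)" and L_sym: "transpose_mat L = L"
    using L unfolding block_diag_sym_def by auto
  have R: "(C - L) * Y \<in> carrier_mat (q*d) p" using C Lc Y by (metis minus_carrier_mat mult_carrier_mat)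
  have entry: "((C - L) * Y * transpose_mat Y + Y * transpose_mat ((C - L) * Y)) $$ (i,j)
      = G $$ (i,j) + G $$ (j,i) - 2 * L $$ (i,j)"
    if "i < q*d" "j < q*d" "same_block d i j" for i j
    using tangent_residual_entry[OF feas \<open>d > 0\<close> C L that] unfolding G_def .
  have "tangent d Y ((C - L) * Y) \<longleftrightarrow> (\<forall>i<q*d. \<forall>j<q*d. same_block d i j \<and> i \<le> j \<longrightarrow>
      G $$ (i,j) + G $$ (j,i) - 2 * L $$ (i,j) = 0)"
    unfolding tangent_def Let_def using R Y entry by auto
  also have "\<dots> \<longleftrightarrow> (\<forall>i<q*d. \<forall>j<q*d. same_block d i j \<longrightarrow> L $$ (i,j) = (G $$ (i,j) + G $$ (j,i)) / 2)"
  proof (intro iffI allI impI)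
    fix i j assume ij: "i < q*d" "j < q*d" "same_block d i j"
      and eqs: "\<forall>i<q*d. \<forall>j<q*d. same_block d i j \<and> i \<le> j \<longrightarrow> G $$ (i,j) + G $$ (j,i) - 2 * L $$ (i,j) = 0"
    have "L $$ (j,i) = L $$ (i,j)"
      using L_sym Lc ij by (metis carrier_matD index_transpose_mat(1))
    moreover have "same_block d j i" using ij(3) unfolding same_block_def by simp
    ultimately show "L $$ (i,j) = (G $$ (i,j) + G $$ (j,i)) / 2"
      using eqs[rule_format, of i j] eqs[rule_format, of j i] ij by (cases "i \<le> j") auto
  next
    fix i j assume ij: "i < q*d" "j < q*d" "same_block d i j \<and> i \<le> j"
      and eqs: "\<forall>i<q*d. \<forall>j<q*d. same_block d i j \<longrightarrow> L $$ (i,j) = (G $$ (i,j) + G $$ (j,i)) / 2"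
    then have "L $$ (i,j) = (G $$ (i,j) + G $$ (j,i)) / 2" by blast
    then show "G $$ (i,j) + G $$ (j,i) - 2 * L $$ (i,j) = 0" by simp
  qed
  finally show ?thesis unfolding G_def .
qed

lemma multiplier_block_diag_sym:
  assumes "dim_row Y = n"
  shows "block_diag_sym n d (multiplier d C Y)"
  unfolding block_diag_sym_def multiplier_def assms
  by (auto simp: same_block_def add.commute intro!: eq_matI)

lemma S_mat_eq_multiplier:
  assumes feas: "bm_feasible q d p Y" and "d > 0" and C: "C \<in> carrier_mat (q*d) (q*d)"
  shows "S_mat d C Y = C - multiplier d C Y"
proof -
  have dim: "dim_row Y = q*d" using feas unfolding bm_feasible_def carrier_mat_def by simp
  have "(THE L. block_diag_sym (q*d) d L \<and> tangent d Y ((C - L) * Y)) = multiplier d C Y"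
  proof (rule the_equality)
    show "block_diag_sym (q*d) d (multiplier d C Y) \<and> tangent d Y ((C - multiplier d C Y) * Y)"
      using multiplier_block_diag_sym[OF dim]
        tangent_residual_iff[OF feas \<open>d > 0\<close> C multiplier_block_diag_sym[OF dim]]
      unfolding multiplier_def dim by simp
  next
    fix L assume L: "block_diag_sym (q*d) d L \<and> tangent d Y ((C - L) * Y)"
    show "L = multiplier d C Y"
    proof (rule eq_matI)
      fix i j assume "i < dim_row (multiplier d C Y)" "j < dim_col (multiplier d C Y)"
      then have ij: "i < q*d" "j < q*d" unfolding multiplier_def dim by auto
      then show "L $$ (i,j) = multiplier d C Y $$ (i,j)"
        using L tangent_residual_iff[OF feas \<open>d > 0\<close> C] unfolding multiplier_def dim block_diag_sym_def
        by (cases "same_block d i j") auto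
    qed (use L in \<open>auto simp: multiplier_def dim block_diag_sym_def\<close>)
  qed
  then show ?thesis unfolding S_mat_def dim by simp
qed

lemma tangent_rank_one_update:
  assumes Y: "Y \<in> carrier_mat n p"
    and eqs: "\<And>i j. i < n \<Longrightarrow> j < n \<Longrightarrow> same_block d i j \<Longrightarrow>
      v i * (\<Sum>l<p. Y $$ (j,l) * z l) + v j * (\<Sum>l<p. Y $$ (i,l) * z l)
      + (\<Sum>k<p. \<Sum>l<p. Y $$ (i,k) * Q k l * Y $$ (j,l))
      + (\<Sum>k<p. \<Sum>l<p. Y $$ (j,k) * Q k l * Y $$ (i,l)) = 0"
  shows "tangent d Y (mat n p (\<lambda>(i,l). v i * z l + (\<Sum>k<p. Y $$ (i,k) * Q k l)))"
proof -
  define Yd where "Yd = mat n p (\<lambda>(i,l). v i * z l + (\<Sum>k<p. Y $$ (i,k) * Q k l))"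
  have Yd: "Yd \<in> carrier_mat n p" unfolding Yd_def by simp
  have Yd_Y: "(\<Sum>l<p. Yd $$ (a,l) * Y $$ (b,l))
      = v a * (\<Sum>l<p. Y $$ (b,l) * z l) + (\<Sum>k<p. \<Sum>l<p. Y $$ (a,k) * Q k l * Y $$ (b,l))"
    if "a < n" for a b
  proof -
    have "(\<Sum>l<p. Yd $$ (a,l) * Y $$ (b,l))
        = (\<Sum>l<p. v a * (Y $$ (b,l) * z l) + (\<Sum>k<p. Y $$ (a,k) * Q k l) * Y $$ (b,l))"
      by (intro sum.cong refl) (simp add: Yd_def that algebra_simps)
    also have "\<dots> = v a * (\<Sum>l<p. Y $$ (b,l) * z l) + (\<Sum>l<p. \<Sum>k<p. Y $$ (a,k) * Q k l * Y $$ (b,l))"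
      by (simp add: sum.distrib sum_distrib_left sum_distrib_right)
    also have "(\<Sum>l<p. \<Sum>k<p. Y $$ (a,k) * Q k l * Y $$ (b,l)) = (\<Sum>k<p. \<Sum>l<p. Y $$ (a,k) * Q k l * Y $$ (b,l))"
      by (rule sum.swap)
    finally show ?thesis .
  qed
  have "(Yd * transpose_mat Y + Y * transpose_mat Yd) $$ (i,j) = 0"
    if ij: "i < n" "j < n" "same_block d i j" for i j
  proof -
    have "(\<Sum>l<p. Y $$ (i,l) * Yd $$ (j,l)) = (\<Sum>l<p. Yd $$ (j,l) * Y $$ (i,l))"
      by (intro sum.cong refl) (rule mult.commute)
    then show ?thesis
      unfolding symmetric_sum_entry[OF Yd Y ij(1,2)] using Yd_Y ij eqs[OF ij] by simp
  qed
  then show ?thesis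
    unfolding tangent_def Let_def Yd_def[symmetric] using Yd Y by auto
qed

lemma image_orthogonal_range:
  fixes S Y :: "real mat"
  assumes S: "S \<in> carrier_mat n n" "transpose_mat S = S"
    and Y: "Y \<in> carrier_mat n p" and SY: "S * Y = 0\<^sub>m n p"
  shows "(\<Sum>i<n. (\<Sum>k<p. Y $$ (i,k) * Q k l) * (\<Sum>j<n. S $$ (i,j) * v j)) = 0"
proof -
  have SY0: "(\<Sum>j<n. S $$ (i,j) * Y $$ (j,k)) = 0" if "i < n" "k < p" for i k
    using mult_mat_entry[OF S(1) Y that] SY that by simp
  have S_sym: "S $$ (j,i) = S $$ (i,j)" if "i < n" "j < n" for i j
    using S that by (metis carrier_matD index_transpose_mat(1))
  have "(\<Sum>i<n. (\<Sum>k<p. Y $$ (i,k) * Q k l) * (\<Sum>j<n. S $$ (i,j) * v j))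
    = (\<Sum>i<n. \<Sum>k<p. \<Sum>j<n. Y $$ (i,k) * Q k l * S $$ (i,j) * v j)"
    by (simp add: sum_distrib_left sum_distrib_right mult_ac)
  also have "\<dots> = (\<Sum>k<p. \<Sum>j<n. \<Sum>i<n. Y $$ (i,k) * Q k l * S $$ (i,j) * v j)"
  proof -
    have "(\<Sum>i<n. \<Sum>k<p. \<Sum>j<n. Y $$ (i,k) * Q k l * S $$ (i,j) * v j)
        = (\<Sum>k<p. \<Sum>i<n. \<Sum>j<n. Y $$ (i,k) * Q k l * S $$ (i,j) * v j)" by (rule sum.swap)
    also have "\<dots> = (\<Sum>k<p. \<Sum>j<n. \<Sum>i<n. Y $$ (i,k) * Q k l * S $$ (i,j) * v j)"
      by (rule sum.cong[OF refl], rule sum.swap)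
    finally show ?thesis .
  qed
  also have "\<dots> = (\<Sum>k<p. \<Sum>j<n. (\<Sum>i<n. S $$ (j,i) * Y $$ (i,k)) * (Q k l * v j))"
  proof (intro sum.cong refl)
    fix k j assume "j \<in> {..<n}"
    then have "(\<Sum>i<n. S $$ (j,i) * Y $$ (i,k)) = (\<Sum>i<n. S $$ (i,j) * Y $$ (i,k))"
      using S_sym by (intro sum.cong refl) simp
    then show "(\<Sum>i<n. Y $$ (i,k) * Q k l * S $$ (i,j) * v j) = (\<Sum>i<n. S $$ (j,i) * Y $$ (i,k)) * (Q k l * v j)"
      by (simp add: sum_distrib_left sum_distrib_right mult_ac)
  qed
  also have "\<dots> = 0" using SY0 by simp
  finally show ?thesis .
qed

lemma second_variation_rank_one_update:
  fixes v z :: "nat \<Rightarrow> real" and Q :: "nat \<Rightarrow> nat \<Rightarrow> real"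
  assumes S: "S \<in> carrier_mat n n" "transpose_mat S = S"
    and Y: "Y \<in> carrier_mat n p" and SY: "S * Y = 0\<^sub>m n p"
  defines "Yd \<equiv> mat n p (\<lambda>(i,l). v i * z l + (\<Sum>k<p. Y $$ (i,k) * Q k l))"
  shows "frob Yd (S * Yd) = (\<Sum>l<p. (z l)\<^sup>2) * qform n (\<lambda>i j. S $$ (i,j)) v"
proof -
  define Sv where "Sv i = (\<Sum>j<n. S $$ (i,j) * v j)" for i
  have Yd: "Yd \<in> carrier_mat n p" unfolding Yd_def by simp
  have Yd_entry: "Yd $$ (i,l) = v i * z l + (\<Sum>k<p. Y $$ (i,k) * Q k l)" if "i < n" "l < p" for i l
    unfolding Yd_def using that by simp
  have SY0: "(\<Sum>j<n. S $$ (i,j) * Y $$ (j,k)) = 0" if "i < n" "k < p" for i k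
    using mult_mat_entry[OF S(1) Y that] SY that by simp
  have SYd: "(S * Yd) $$ (i,l) = Sv i * z l" if "i < n" "l < p" for i l
  proof -
    have "(S * Yd) $$ (i,l) = (\<Sum>j<n. S $$ (i,j) * Yd $$ (j,l))"
      by (rule mult_mat_entry[OF S(1) Yd that])
    also have "\<dots> = (\<Sum>j<n. S $$ (i,j) * (v j * z l + (\<Sum>k<p. Y $$ (j,k) * Q k l)))"
      using that by (intro sum.cong refl) (simp add: Yd_entry)
    also have "\<dots> = Sv i * z l + (\<Sum>j<n. \<Sum>k<p. S $$ (i,j) * Y $$ (j,k) * Q k l)"
      unfolding Sv_def by (simp add: algebra_simps sum.distrib sum_distrib_left sum_distrib_right)
    also have "(\<Sum>j<n. \<Sum>k<p. S $$ (i,j) * Y $$ (j,k) * Q k l) = (\<Sum>k<p. (\<Sum>j<n. S $$ (i,j) * Y $$ (j,k)) * Q k l)"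
      by (subst sum.swap) (simp add: sum_distrib_right)
    finally show ?thesis using SY0 that by simp
  qed
  define T where "T i l = (\<Sum>k<p. Y $$ (i,k) * Q k l)" for i l
  have range_orth: "(\<Sum>i<n. T i l * Sv i) = 0" for l
    unfolding T_def Sv_def by (rule image_orthogonal_range[OF S Y SY])
  have "frob Yd (S * Yd) = (\<Sum>i<n. \<Sum>l<p. (v i * z l + T i l) * (Sv i * z l))"
    unfolding frob_carrier[OF Yd] by (intro sum.cong refl) (simp add: SYd Yd_entry T_def)
  also have "\<dots> = (\<Sum>l<p. \<Sum>i<n. (z l)\<^sup>2 * (v i * Sv i) + z l * (T i l * Sv i))"
    by (subst sum.swap) (simp add: algebra_simps power2_eq_square)
  also have "\<dots> = (\<Sum>l<p. (z l)\<^sup>2 * (\<Sum>i<n. v i * Sv i) + z l * (\<Sum>i<n. T i l * Sv i))"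
    by (simp add: sum.distrib sum_distrib_left)
  also have "\<dots> = (\<Sum>l<p. (z l)\<^sup>2) * (\<Sum>i<n. v i * Sv i)"
    by (simp add: range_orth sum_distrib_right)
  also have "(\<Sum>i<n. v i * Sv i) = qform n (\<lambda>i j. S $$ (i,j)) v"
    unfolding qform_def Sv_def by (simp add: sum_distrib_left mult_ac)
  finally show ?thesis .
qed

lemma second_order_critical_psd:
  assumes crit: "second_order_critical q d p C Y" and "d > 0"
    and C: "C \<in> carrier_mat (q*d) (q*d)" "transpose_mat C = C"
    and count: "(d+1)*(q*d) < (d+3)*p"
  shows "psd_form (q*d) (\<lambda>i j. S_mat d C Y $$ (i,j))"
proof -
  have feas: "bm_feasible q d p Y" and SY: "S_mat d C Y * Y = 0\<^sub>m (q*d) p"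
    and second: "\<And>Yd. tangent d Y Yd \<Longrightarrow> 0 \<le> frob Yd (S_mat d C Y * Yd)"
    using crit unfolding second_order_critical_def by auto
  interpret rows: block_orthonormal_rows "\<lambda>a l. Y $$ (a,l)" "q*d" d p
    by (rule bm_feasible_block_orthonormal_rows[OF feas \<open>d > 0\<close>])
  have Y: "Y \<in> carrier_mat (q*d) p" using feas unfolding bm_feasible_def by simp
  define S where "S = S_mat d C Y"
  have "dim_row Y = q*d" using Y by simp
  then have L: "multiplier d C Y \<in> carrier_mat (q*d) (q*d)" "transpose_mat (multiplier d C Y) = multiplier d C Y"
    using multiplier_block_diag_sym unfolding block_diag_sym_def by blast+
  have S_eq: "S = C - multiplier d C Y"
    unfolding S_def by (rule S_mat_eq_multiplier[OF feas \<open>d > 0\<close> C(1)])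
  have S: "S \<in> carrier_mat (q*d) (q*d)"
    unfolding S_eq using L(1) by (rule minus_carrier_mat)
  have S_sym: "transpose_mat S = S"
    unfolding S_eq using transpose_minus[OF C(1) L(1)] C(2) L(2) by simp
  show ?thesis unfolding psd_form_def
  proof
    fix v
    obtain z Q where z: "\<exists>l<p. z l \<noteq> 0" and eqs: "\<forall>i<q*d. \<forall>j<q*d. i div d = j div d \<longrightarrow>
        v i * (\<Sum>l<p. Y $$ (j,l) * z l) + v j * (\<Sum>l<p. Y $$ (i,l) * z l)
        + rows.sandwich Q i j + rows.sandwich Q j i = 0"
      using rows.exists_tangent_direction[OF count, of v] by blast
    define Yd where "Yd = mat (q*d) p (\<lambda>(i,l). v i * z l + (\<Sum>k<p. Y $$ (i,k) * Q k l))"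
    have "tangent d Y Yd"
      unfolding Yd_def using eqs by (intro tangent_rank_one_update[OF Y]) (simp add: rows.sandwich_def same_block_def)
    then have "0 \<le> frob Yd (S * Yd)" unfolding S_def by (rule second)
    also have "frob Yd (S * Yd) = (\<Sum>l<p. (z l)\<^sup>2) * qform (q*d) (\<lambda>i j. S $$ (i,j)) v"
      unfolding Yd_def by (rule second_variation_rank_one_update[OF S S_sym Y SY[folded S_def]])
    finally have "0 \<le> (\<Sum>l<p. (z l)\<^sup>2) * qform (q*d) (\<lambda>i j. S $$ (i,j)) v" .
    moreover have "0 < (\<Sum>l<p. (z l)\<^sup>2)"
    proof -
      obtain l0 where "l0 < p" "z l0 \<noteq> 0" using z by blast
      then have "0 < (z l0)\<^sup>2" by simp
      also have "\<dots> \<le> (\<Sum>l<p. (z l)\<^sup>2)" using \<open>l0 < p\<close> by (intro member_le_sum) auto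
      finally show ?thesis .
    qed
    ultimately show "0 \<le> qform (q*d) (\<lambda>i j. S_mat d C Y $$ (i,j)) v"
      unfolding S_def by (simp add: zero_le_mult_iff)
  qed
qed

lemma qform_vec:
  fixes X :: "real mat" and v :: "nat \<Rightarrow> real"
  assumes "X \<in> carrier_mat n n"
  shows "vec n v \<bullet> (X *\<^sub>v vec n v) = qform n (\<lambda>i j. X $$ (i,j)) v"
proof -
  have "vec n v \<bullet> (X *\<^sub>v vec n v) = (\<Sum>i<n. v i * (\<Sum>j<n. X $$ (i,j) * v j))"
    using assms by (simp add: scalar_prod_def atLeast0LessThan)
  then show ?thesis unfolding qform_def by (simp add: sum_distrib_left mult.assoc)
qed

lemma psd_form_of_psd:
  assumes "psd X" "X \<in> carrier_mat n n"
  shows "psd_form n (\<lambda>i j. X $$ (i,j))"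
  unfolding psd_form_def
proof
  fix v :: "nat \<Rightarrow> real"
  have "vec n v \<in> carrier_vec (dim_row X)" using assms(2) by simp
  then have "0 \<le> vec n v \<bullet> (X *\<^sub>v vec n v)" using assms(1) unfolding psd_def by blast
  then show "0 \<le> qform n (\<lambda>i j. X $$ (i,j)) v" using qform_vec[OF assms(2)] by simp
qed

lemma frob_psd_nonneg:
  assumes "S \<in> carrier_mat n n" "psd_form n (\<lambda>i j. S $$ (i,j))" "psd X" "X \<in> carrier_mat n n"
  shows "0 \<le> frob S X"
proof -
  have "X $$ (i,j) = X $$ (j,i)" if "i < n" "j < n" for i j
    using assms(3,4) that unfolding psd_def sym_mat_def by (metis carrier_matD index_transpose_mat(1))
  then show ?thesis
    unfolding frob_carrier[OF assms(1)]
    by (rule psd_form_inner_nonneg[OF assms(2) psd_form_of_psd[OF assms(3,4)]])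
qed

lemma frob_diff_left:
  assumes "A \<in> carrier_mat n m" "B \<in> carrier_mat n m"
  shows "frob (A - B) W = frob A W - frob B W"
  using assms unfolding frob_carrier[OF assms(1)] frob_carrier[OF assms(2)]
    frob_carrier[OF minus_carrier_mat[OF assms(2)]]
  by (simp add: algebra_simps sum_subtractf)

lemma frob_block_diag_sbd_id:
  assumes L: "block_diag_sym n d L" and W: "W \<in> carrier_mat n n" "sbd_eq_id d W"
  shows "frob L W = (\<Sum>i<n. L $$ (i,i))"
proof -
  have Lc: "L \<in> carrier_mat n n" using L unfolding block_diag_sym_def by simp
  have "L $$ (i,j) * W $$ (i,j) = (if j = i then L $$ (i,j) else 0)" if "i < n" "j < n" for i j
    using L W that unfolding block_diag_sym_def sbd_eq_id_def by (cases "same_block d i j") auto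
  then have "frob L W = (\<Sum>i<n. \<Sum>j<n. if j = i then L $$ (i,j) else 0)"
    unfolding frob_carrier[OF Lc] by simp
  then show ?thesis by simp
qed

lemma frob_gram_zero:
  assumes S: "S \<in> carrier_mat n n" and Y: "Y \<in> carrier_mat n p" and SY: "S * Y = 0\<^sub>m n p"
  shows "frob S (Y * transpose_mat Y) = 0"
proof -
  have "frob S (Y * transpose_mat Y) = (\<Sum>i<n. \<Sum>j<n. \<Sum>l<p. Y $$ (i,l) * (S $$ (i,j) * Y $$ (j,l)))"
    unfolding frob_carrier[OF S] using gram_entry[OF Y] by (simp add: sum_distrib_left mult_ac)
  also have "\<dots> = (\<Sum>i<n. \<Sum>l<p. Y $$ (i,l) * (S * Y) $$ (i,l))"
  proof (rule sum.cong[OF refl])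
    fix i assume "i \<in> {..<n}"
    then show "(\<Sum>j<n. \<Sum>l<p. Y $$ (i,l) * (S $$ (i,j) * Y $$ (j,l))) = (\<Sum>l<p. Y $$ (i,l) * (S * Y) $$ (i,l))"
      using mult_mat_entry[OF S Y] by (subst sum.swap) (simp add: sum_distrib_left)
  qed
  also have "\<dots> = 0" using SY by simp
  finally show ?thesis .
qed

lemma dual_certificate_lower_bound:
  assumes L: "block_diag_sym n d L" and C: "C \<in> carrier_mat n n"
    and psd: "psd_form n (\<lambda>i j. (C - L) $$ (i,j))"
    and Y: "Y \<in> carrier_mat n p" "(C - L) * Y = 0\<^sub>m n p" "orthocut_feasible n d (Y * transpose_mat Y)"
    and X: "orthocut_feasible n d X"
  shows "frob C (Y * transpose_mat Y) \<le> frob C X"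
proof -
  have Lc: "L \<in> carrier_mat n n" using L unfolding block_diag_sym_def by simp
  have CL: "C - L \<in> carrier_mat n n" using Lc by (rule minus_carrier_mat)
  have split: "frob C W = frob (C - L) W + (\<Sum>i<n. L $$ (i,i))" if "orthocut_feasible n d W" for W
    using frob_diff_left[OF C Lc, of W] frob_block_diag_sbd_id[OF L, of W] that
    unfolding orthocut_feasible_def by simp
  have "frob (C - L) (Y * transpose_mat Y) = 0" by (rule frob_gram_zero[OF CL Y(1,2)])
  moreover have "0 \<le> frob (C - L) X"
    using X unfolding orthocut_feasible_def by (intro frob_psd_nonneg[OF CL psd]) auto
  ultimately show ?thesis using split[OF X] split[OF Y(3)] by simp
qed

lemma gram_orthocut_feasible:
  assumes feas: "bm_feasible q d p Z" and "d > 0"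
  shows "orthocut_feasible (q*d) d (Z * transpose_mat Z)"
proof -
  have Z: "Z \<in> carrier_mat (q*d) p" using feas unfolding bm_feasible_def by simp
  define G where "G = Z * transpose_mat Z"
  have G: "G \<in> carrier_mat (q*d) (q*d)" unfolding G_def using Z by simp
  have sym: "sym_mat G"
    unfolding sym_mat_def G_def using Z transpose_mult[OF Z, of "transpose_mat Z" "q*d"] by simp
  have "sbd_eq_id d G"
    unfolding sbd_eq_id_def G_def using gram_block_identity[OF feas \<open>d > 0\<close>] Z by simp
  moreover have "psd G" unfolding psd_def
  proof (intro conjI ballI)
    fix v :: "real vec" assume "v \<in> carrier_vec (dim_row G)"
    then have v: "v \<in> carrier_vec (q*d)" using G by simp
    define w where "w = transpose_mat Z *\<^sub>v v"
    have "v \<bullet> (G *\<^sub>v v) = v \<bullet> (Z *\<^sub>v w)"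
      unfolding G_def w_def using Z v by simp
    also have "\<dots> = w \<bullet> w"
      unfolding w_def using transpose_vec_mult_scalar[OF Z _ v] Z v by simp
    also have "\<dots> \<ge> 0" unfolding scalar_prod_def by (intro sum_nonneg) simp
    finally show "0 \<le> v \<bullet> (G *\<^sub>v v)" .
  qed (rule sym)
  ultimately show ?thesis unfolding orthocut_feasible_def G_def[symmetric] using G sym by simp
qed

lemma bm_obj_eq_frob_gram:
  assumes C: "C \<in> carrier_mat n n" and Z: "Z \<in> carrier_mat n p"
  shows "bm_obj C Z = frob C (Z * transpose_mat Z)"
proof -
  have "bm_obj C Z = (\<Sum>i<n. \<Sum>l<p. (C * Z) $$ (i,l) * Z $$ (i,l))"
    unfolding bm_obj_def by (rule frob_carrier[OF mult_carrier_mat[OF C Z]])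
  also have "\<dots> = (\<Sum>i<n. \<Sum>l<p. \<Sum>j<n. C $$ (i,j) * (Z $$ (j,l) * Z $$ (i,l)))"
    by (intro sum.cong refl) (simp add: mult_mat_entry[OF C Z] sum_distrib_left mult_ac)
  also have "\<dots> = (\<Sum>i<n. \<Sum>j<n. C $$ (i,j) * (\<Sum>l<p. Z $$ (i,l) * Z $$ (j,l)))"
    by (rule sum.cong[OF refl], subst sum.swap) (simp add: sum_distrib_left mult_ac)
  also have "\<dots> = frob C (Z * transpose_mat Z)"
    unfolding frob_carrier[OF C] using gram_entry[OF Z] by simp
  finally show ?thesis .
qed

theorem corollary10:
  fixes q d p :: nat and C Y :: "real mat"
  assumes "q > 0" and "d > 0"
    and "C \<in> carrier_mat (q*d) (q*d)" and "transpose_mat C = C"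
    and "real p > (real d + 1) / (real d + 3) * real (q*d)"
    and "second_order_critical q d p C Y"
  shows "(\<forall>Z. bm_feasible q d p Z \<longrightarrow> bm_obj C Y \<le> bm_obj C Z)
       \<and> orthocut_feasible (q*d) d (Y * transpose_mat Y)
       \<and> (\<forall>X. orthocut_feasible (q*d) d X \<longrightarrow> frob C (Y * transpose_mat Y) \<le> frob C X)"
proof -
  note d = \<open>d > 0\<close> and C = \<open>C \<in> carrier_mat (q*d) (q*d)\<close>
  have feas: "bm_feasible q d p Y" and SY: "S_mat d C Y * Y = 0\<^sub>m (q*d) p"
    using assms(6) unfolding second_order_critical_def by auto
  have Y: "Y \<in> carrier_mat (q*d) p" using feas unfolding bm_feasible_def by simp
  have "real ((d+1)*(q*d)) < real ((d+3)*p)"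
    using assms(5) by (simp add: field_simps)
  then have count: "(d+1)*(q*d) < (d+3)*p" by (simp only: of_nat_less_iff)
  have S: "S_mat d C Y = C - multiplier d C Y" by (rule S_mat_eq_multiplier[OF feas d C])
  have lower_bound: "frob C (Y * transpose_mat Y) \<le> frob C X" if "orthocut_feasible (q*d) d X" for X
  proof (rule dual_certificate_lower_bound[OF _ C _ Y _ _ that])
    show "block_diag_sym (q*d) d (multiplier d C Y)" using Y by (intro multiplier_block_diag_sym) simp
    show "psd_form (q*d) (\<lambda>i j. (C - multiplier d C Y) $$ (i,j))"
      using second_order_critical_psd[OF assms(6) d C assms(4) count] unfolding S .
    show "(C - multiplier d C Y) * Y = 0\<^sub>m (q*d) p" using SY unfolding S .
    show "orthocut_feasible (q*d) d (Y * transpose_mat Y)" by (rule gram_orthocut_feasible[OF feas d])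
  qed
  have "bm_obj C Y \<le> bm_obj C Z" if "bm_feasible q d p Z" for Z
  proof -
    have Z: "Z \<in> carrier_mat (q*d) p" using that unfolding bm_feasible_def by simp
    show ?thesis unfolding bm_obj_eq_frob_gram[OF C Y] bm_obj_eq_frob_gram[OF C Z]
      by (rule lower_bound[OF gram_orthocut_feasible[OF that d]])
  qed
  then show ?thesis using lower_bound gram_orthocut_feasible[OF feas d] by blast
qed

end
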